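(* Let $n$ be a positive integer, let $x,y,z$ be complex numbers with $x+y+z=1$, and let $t$ be a complex number with $t\notin\{0,1,\dots,n\}$. Then $$\frac{(-1)^n}2\sum_{k=0}^{n-1}\binom t{k}E_k(x)E_{n-1-k}(y)=\frac 1{n-t}\sum_{k=0}^n\binom {n-t}kB_k(x)E_{n-k}(z)+\binom tn\sum_{k=0}^n\binom nk\frac {E_{k}(z)}{t-k}B_{n-k}(y),$$ $$\frac n2\binom tn\sum_{k=0}^{n-1}\binom {n-1}k\frac {E_{k}(x)}{t-k}E_{n-1-k}(y)-(-1)^nE_n(z)\binom tn\sum_{k=0}^{n-1}\frac1{t-k}=(-1)^n\sum_{k=1}^n\binom t{n-k}\frac {B_k(y)}{k}E_{n-k}(z)-\sum_{k=1}^n\binom {n-1-t}{n-k}\frac {B_k(x)}kE_{n-k}(z),$$ and $$\frac {(-1)^{n-1}}n\binom {t-1}{n-1}\sum_{k=0}^n\binom nk\frac {B_k(x)}{t-k}B_{n-k}(y)-\frac {B_n(z)}n\binom {t-1}{n-1}\sum_{k=1}^{n-1}\frac1{t-k}=\frac 1t\sum_{k=1}^{n}\binom t{n-k}\frac{B_{k}(y)}kB_{n-k}(z)+\frac {(-1)^n}{n-t}\sum_{k=1}^n\binom {n-t}{n-k}\frac{B_k(x)}kB_{n-k}(z).$$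
   Context: Bernoulli numbers are defined by $B_0=1$ and $\sum_{k=0}^n\binom{n+1}kB_k=0$ for $n\ge1$; Euler numbers by $E_0=1$ and $\sum_{0\le k\le n,\,2\mid n-k}\binom nkE_k=0$ for $n\ge1$. The Bernoulli polynomials are $B_n(x)=\sum_{k=0}^n\binom nkB_kx^{n-k}$ and the Euler polynomials are $E_n(x)=\sum_{k=0}^n\binom nk\frac{E_k}{2^k}(x-\frac12)^{n-k}$. For complex $z$ and integer $k\ge0$, $\binom zk=z(z-1)\cdots(z-k+1)/k!$ (with $\binom z0=1$). *)

theory Defs
  imports Complex_Main
begin

fun bern :: "nat \<Rightarrow> complex" where
  "bern n = (if n = 0 then 1
     else - (\<Sum>k<n. of_nat ((n + 1) choose k) * bern k) / of_nat (n + 1))"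

fun euler :: "nat \<Rightarrow> complex" where
  "euler n = (if n = 0 then 1
     else - (\<Sum>k\<in>{k. k < n \<and> even (n - k)}. of_nat (n choose k) * euler k))"

definition bernpoly :: "nat \<Rightarrow> complex \<Rightarrow> complex" where
  "bernpoly n x = (\<Sum>k\<le>n. of_nat (n choose k) * bern k * x ^ (n - k))"

definition eulerpoly :: "nat \<Rightarrow> complex \<Rightarrow> complex" where
  "eulerpoly n x = (\<Sum>k\<le>n. of_nat (n choose k) * (euler k / 2 ^ k) * (x - 1/2) ^ (n - k))"

end

theory Submission
  imports Defs "HOL-Analysis.Derivative"
begin

text \<open>Each identity is written as \<open>defect n t x y z = 0\<close>, where the defect is a combination of
  weighted convolutions \<open>\<Sum>k\<le>m. c k * P k u * Q (m - k) v\<close> of the Appell sequences \<open>bernpoly\<close> and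
  \<open>eulerpoly\<close> (\<open>P k' = k * P (k - 1)\<close>). Thanks to binomial recurrences satisfied by the weights,
  the derivative of \<open>defect (n + 1) t\<close> along two directions of the plane \<open>x + y + z = 1\<close> is a
  multiple of \<open>defect n (t - 1)\<close> or \<open>defect n t\<close>. By induction on \<open>n\<close> the defect is therefore
  constant on the plane, and the constant is computed from the values of the polynomials at \<open>0\<close>
  and \<open>1\<close>, using the reflection formulas \<open>B\<^sub>n(1 - x) = (-1)\<^sup>n B\<^sub>n(x)\<close> and
  \<open>E\<^sub>n(1 - x) = (-1)\<^sup>n E\<^sub>n(x)\<close>.\<close>

section \<open>Bernoulli and Euler polynomials\<close>

declare bern.simps [simp del] euler.simps [simp del]

lemma bern_0 [simp]: "bern 0 = 1"
  by (subst bern.simps) simp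

lemma bern_1 [simp]: "bern (Suc 0) = -1/2"
  by (subst bern.simps) (simp add: numeral_2_eq_2)

lemma euler_0 [simp]: "euler 0 = 1"
  by (subst euler.simps) simp

lemma euler_1 [simp]: "euler (Suc 0) = 0"
proof -
  have "{k. k < Suc 0 \<and> even (Suc 0 - k)} = {}"
    by auto
  then show ?thesis
    by (subst euler.simps) simp
qed

lemma bernpoly_0 [simp]: "bernpoly 0 x = 1"
  by (simp add: bernpoly_def)

lemma eulerpoly_0 [simp]: "eulerpoly 0 x = 1"
  by (simp add: eulerpoly_def)

lemma bernpoly_1 [simp]: "bernpoly (Suc 0) x = x - 1/2"
  by (simp add: bernpoly_def)

lemma eulerpoly_1 [simp]: "eulerpoly (Suc 0) x = x - 1/2"
  by (simp add: eulerpoly_def)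

lemma binomial_sum_has_field_derivative:
  fixes a :: "nat \<Rightarrow> complex"
  shows "((\<lambda>x. \<Sum>k\<le>n. of_nat (n choose k) * a k * (x - c) ^ (n - k)) has_field_derivative
          of_nat n * (\<Sum>k\<le>n - 1. of_nat ((n - 1) choose k) * a k * (x - c) ^ (n - 1 - k))) (at x)"
proof (cases n)
  case 0
  then show ?thesis by simp
next
  case (Suc m)
  have "((\<lambda>x. of_nat (n choose k) * a k * (x - c) ^ (n - k)) has_field_derivative
          of_nat n * (of_nat (m choose k) * a k * (x - c) ^ (m - k))) (at x)" for k
  proof -
    have "of_nat (n choose k) * of_nat (n - k) = (of_nat n * of_nat (m choose k) :: complex)"
      using binomial_absorb_comp[of n k] Suc by (metis diff_Suc_1 mult.commute of_nat_mult)
    then show ?thesis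
      using Suc by (auto intro!: derivative_eq_intros simp: mult_ac simp del: of_nat_diff)
  qed
  then have "((\<lambda>x. \<Sum>k\<le>n. of_nat (n choose k) * a k * (x - c) ^ (n - k)) has_field_derivative
      (\<Sum>k\<le>n. of_nat n * (of_nat (m choose k) * a k * (x - c) ^ (m - k)))) (at x)"
    by (intro DERIV_sum)
  then show ?thesis
    using Suc by (simp add: sum_distrib_left binomial_eq_0)
qed

definition appell_seq :: "(nat \<Rightarrow> complex \<Rightarrow> complex) \<Rightarrow> bool" where
  "appell_seq P \<longleftrightarrow> (\<forall>k x. (P k has_field_derivative of_nat k * P (k - 1) x) (at x))"

lemma appell_seq_bernpoly: "appell_seq bernpoly"
  using binomial_sum_has_field_derivative[where a = bern and c = 0]
  by (simp add: appell_seq_def bernpoly_def [abs_def])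

lemma appell_seq_eulerpoly: "appell_seq eulerpoly"
  using binomial_sum_has_field_derivative[where a = "\<lambda>k. euler k / 2 ^ k" and c = "1/2"]
  by (simp add: appell_seq_def eulerpoly_def [abs_def] mult.assoc)

lemma appell_seq_chain:
  assumes "appell_seq P" and "(f has_field_derivative \<alpha>) (at s)"
  shows "((\<lambda>s. P k (f s)) has_field_derivative \<alpha> * of_nat k * P (k - 1) (f s)) (at s)"
proof -
  have "(P k has_field_derivative of_nat k * P (k - 1) (f s)) (at (f s))"
    using assms(1) unfolding appell_seq_def by blast
  from DERIV_chain2[OF this assms(2)] show ?thesis
    by (simp add: mult_ac)
qed

lemma bernpoly_at_0 [simp]: "bernpoly n 0 = bern n"
proof -
  have "bernpoly n 0 = (\<Sum>k\<le>n. if k = n then bern n else 0)"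
    unfolding bernpoly_def by (intro sum.cong) auto
  then show ?thesis
    by simp
qed

lemma bernpoly_at_1: "bernpoly n 1 = bern n + (if n = 1 then 1 else 0)"
proof (cases "n \<ge> 2")
  case True
  then obtain m where m: "n = Suc m" "m \<ge> 1"
    by (cases n) auto
  have "of_nat (Suc m) * bern m = - (\<Sum>k<m. of_nat (Suc m choose k) * bern k)"
    using m(2) bern.simps[of m] by (simp add: field_simps del: of_nat_Suc)
  then show ?thesis
    using m by (simp add: bernpoly_def lessThan_Suc_atMost[symmetric] del: of_nat_Suc)
next
  case False
  then consider "n = 0" | "n = 1"
    by linarith
  then show ?thesis
    by cases (auto simp: bernpoly_def)
qed

lemma eulerpoly_0_plus_1: "eulerpoly n 0 + eulerpoly n 1 = (if n = 0 then 2 else 0)"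
proof (cases "n = 0")
  case False
  have "eulerpoly n 0 + eulerpoly n 1
      = (\<Sum>k\<le>n. if even (n - k) then of_nat (n choose k) * euler k * (2 / 2 ^ n) else 0)"
    unfolding eulerpoly_def sum.distrib[symmetric]
  proof (intro sum.cong refl)
    fix k
    assume "k \<in> {..n}"
    then have "(2::complex) ^ n = 2 ^ k * 2 ^ (n - k)"
      by (simp add: power_add[symmetric])
    then show "of_nat (n choose k) * (euler k / 2 ^ k) * (0 - 1/2) ^ (n - k)
          + of_nat (n choose k) * (euler k / 2 ^ k) * (1 - 1/2) ^ (n - k)
        = (if even (n - k) then of_nat (n choose k) * euler k * (2 / 2 ^ n) else 0)"
      by (auto simp: power_divide field_simps)
  qed
  also have "\<dots> = (\<Sum>k\<in>{k\<in>{..n}. even (n - k)}. of_nat (n choose k) * euler k) * (2 / 2 ^ n)"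
    by (simp only: sum.inter_filter[OF finite_atMost] sum_distrib_right) (intro sum.cong refl, simp)
  also have "(\<Sum>k\<in>{k\<in>{..n}. even (n - k)}. of_nat (n choose k) * euler k) = 0"
  proof -
    have "{k\<in>{..n}. even (n - k)} = insert n {k. k < n \<and> even (n - k)}"
      by auto
    then show ?thesis
      using False euler.simps[of n] by simp
  qed
  finally show ?thesis
    using False by simp
qed simp

lemma has_field_derivative_const_imp_diff:
  fixes f :: "complex \<Rightarrow> complex"
  assumes "\<And>s. (f has_field_derivative k) (at s)"
  shows "f b - f a = k * (b - a)"
proof -
  have "((\<lambda>s. f s - k * s) has_field_derivative 0) (at s)" for s
    using DERIV_diff[OF assms DERIV_cmult[OF DERIV_ident, of k]] by simp
  then obtain c where "\<forall>s\<in>UNIV. f s - k * s = c"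
    using has_field_derivative_zero_constant[of UNIV "\<lambda>s. f s - k * s"] by auto
  then have "f b - k * b = f a - k * a"
    by simp
  then show ?thesis
    by (simp add: algebra_simps)
qed

lemma appell_seq_reflection_defect_has_field_derivative:
  assumes "appell_seq P"
  shows "((\<lambda>x. P (Suc n) (1 - x) - (-1) ^ Suc n * P (Suc n) x) has_field_derivative
           - of_nat (Suc n) * (P n (1 - x) - (-1) ^ n * P n x)) (at x)"
proof -
  have "((\<lambda>x. 1 - x) has_field_derivative -1) (at x)"
    by (auto intro!: derivative_eq_intros)
  from appell_seq_chain[OF assms this, of "Suc n"]
  have "((\<lambda>x. P (Suc n) (1 - x)) has_field_derivative - of_nat (Suc n) * P n (1 - x)) (at x)"
    by simp
  moreover have "(P (Suc n) has_field_derivative of_nat (Suc n) * P n x) (at x)"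
    using assms unfolding appell_seq_def by (metis diff_Suc_1)
  ultimately have "((\<lambda>x. P (Suc n) (1 - x) - (-1) ^ Suc n * P (Suc n) x) has_field_derivative
      - of_nat (Suc n) * P n (1 - x) - (-1) ^ Suc n * (of_nat (Suc n) * P n x)) (at x)"
    by (intro DERIV_diff DERIV_cmult)
  then show ?thesis
    by (simp add: algebra_simps)
qed

lemma bernpoly_reflect: "bernpoly n (1 - x) = (-1) ^ n * bernpoly n x"
proof (induction n arbitrary: x)
  case (Suc n)
  define R where "R m x = bernpoly m (1 - x) - (-1) ^ m * bernpoly m x" for m x
  have R_deriv: "(R (Suc m) has_field_derivative - of_nat (Suc m) * R m x) (at x)" for m x
    unfolding R_def [abs_def] by (rule appell_seq_reflection_defect_has_field_derivative[OF appell_seq_bernpoly])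
  have "(R (Suc n) has_field_derivative 0) (at x)" for x
    using R_deriv[of n x] Suc.IH by (simp add: R_def)
  then have R_const: "R (Suc n) x = R (Suc n) 0" for x
    using has_field_derivative_const_imp_diff[of "R (Suc n)" 0] by simp
  \<comment> \<open>the constant \<open>R (Suc n) 0\<close> is, up to a factor, the slope of \<open>R (Suc (Suc n))\<close>,
    which takes the same value at \<open>0\<close> and \<open>1\<close>\<close>
  have "R (Suc (Suc n)) 1 - R (Suc (Suc n)) 0 = - of_nat (Suc (Suc n)) * R (Suc n) 0 * (1 - 0)"
    using has_field_derivative_const_imp_diff R_deriv[of "Suc n"] R_const by metis
  moreover have "R (Suc (Suc n)) 1 = R (Suc (Suc n)) 0"
    by (simp add: R_def bernpoly_at_1)
  ultimately have "R (Suc n) 0 = 0"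
    by (simp del: of_nat_Suc)
  then show ?case
    using R_const[of x] by (simp add: R_def eq_neg_iff_add_eq_0)
qed simp

lemma eulerpoly_reflect: "eulerpoly n (1 - x) = (-1) ^ n * eulerpoly n x"
proof (induction n arbitrary: x)
  case (Suc n)
  define R where "R x = eulerpoly (Suc n) (1 - x) - (-1) ^ Suc n * eulerpoly (Suc n) x" for x
  have "(R has_field_derivative 0) (at x)" for x
    using appell_seq_reflection_defect_has_field_derivative[OF appell_seq_eulerpoly, of n x] Suc.IH
    by (simp add: R_def [abs_def])
  then have R_const: "R x = R 0" for x
    using has_field_derivative_const_imp_diff[of R 0] by simp
  have "R 0 + R 1 = (1 - (-1) ^ Suc n) * (eulerpoly (Suc n) 0 + eulerpoly (Suc n) 1)"
    by (simp add: R_def algebra_simps)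
  then have "R 0 = 0"
    using R_const[of 1] eulerpoly_0_plus_1[of "Suc n"] by simp
  then show ?case
    using R_const[of x] by (simp add: R_def eq_neg_iff_add_eq_0)
qed simp

lemma bern_odd_eq_0: "odd n \<Longrightarrow> n \<noteq> 1 \<Longrightarrow> bern n = 0"
  using bernpoly_reflect[of n 0] bernpoly_at_1[of n] by simp

lemma eulerpoly_even_at_0: "even n \<Longrightarrow> n \<noteq> 0 \<Longrightarrow> eulerpoly n 0 = 0"
  using eulerpoly_reflect[of n 0] eulerpoly_0_plus_1[of n] by simp

section \<open>Weighted convolutions of Appell sequences\<close>

definition wconv ::
    "(nat \<Rightarrow> complex \<Rightarrow> complex) \<Rightarrow> (nat \<Rightarrow> complex \<Rightarrow> complex) \<Rightarrow> (nat \<Rightarrow> complex) \<Rightarrow>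
      nat \<Rightarrow> complex \<Rightarrow> complex \<Rightarrow> complex" where
  "wconv P Q c m u v = (\<Sum>k\<le>m. c k * P k u * Q (m - k) v)"

lemma wconv_has_field_derivative:
  assumes P: "appell_seq P" and Q: "appell_seq Q"
    and f: "(f has_field_derivative \<alpha>) (at s)" and g: "(g has_field_derivative \<beta>) (at s)"
  shows "((\<lambda>s. wconv P Q c (Suc m) (f s) (g s)) has_field_derivative
           wconv P Q (\<lambda>j. \<alpha> * c (Suc j) * of_nat (Suc j) + \<beta> * c j * of_nat (Suc m - j)) m (f s) (g s))
         (at s)"
proof -
  define u v where "u = f s" and "v = g s"
  have "((\<lambda>s. c k * P k (f s) * Q (Suc m - k) (g s)) has_field_derivative
          \<alpha> * c k * of_nat k * P (k - 1) u * Q (Suc m - k) v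
          + \<beta> * c k * of_nat (Suc m - k) * P k u * Q (m - k) v) (at s)" for k
    using DERIV_mult[OF DERIV_cmult[OF appell_seq_chain[OF P f, of k]]
        appell_seq_chain[OF Q g, of "Suc m - k"], of "c k"]
    by (simp add: u_def v_def algebra_simps)
  then have "((\<lambda>s. wconv P Q c (Suc m) (f s) (g s)) has_field_derivative
      (\<Sum>k\<le>Suc m. \<alpha> * c k * of_nat k * P (k - 1) u * Q (Suc m - k) v)
      + (\<Sum>k\<le>Suc m. \<beta> * c k * of_nat (Suc m - k) * P k u * Q (m - k) v)) (at s)"
    unfolding wconv_def sum.distrib[symmetric] by (intro DERIV_sum)
  also have "(\<Sum>k\<le>Suc m. \<alpha> * c k * of_nat k * P (k - 1) u * Q (Suc m - k) v)
      = (\<Sum>j\<le>m. \<alpha> * c (Suc j) * of_nat (Suc j) * P j u * Q (m - j) v)"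
    by (subst sum.atMost_Suc_shift) simp
  also have "(\<Sum>k\<le>Suc m. \<beta> * c k * of_nat (Suc m - k) * P k u * Q (m - k) v)
      = (\<Sum>j\<le>m. \<beta> * c j * of_nat (Suc m - j) * P j u * Q (m - j) v)"
    by simp
  also have "(\<Sum>j\<le>m. \<alpha> * c (Suc j) * of_nat (Suc j) * P j u * Q (m - j) v)
      + (\<Sum>j\<le>m. \<beta> * c j * of_nat (Suc m - j) * P j u * Q (m - j) v)
      = wconv P Q (\<lambda>j. \<alpha> * c (Suc j) * of_nat (Suc j) + \<beta> * c j * of_nat (Suc m - j)) m u v"
    unfolding wconv_def sum.distrib[symmetric] by (intro sum.cong) (simp_all add: algebra_simps)
  finally show ?thesis
    by (simp only: u_def v_def)
qed

lemma wconv_has_field_derivative_rec: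
  assumes "appell_seq P" and "appell_seq Q"
    and "(f has_field_derivative \<alpha>) (at s)" and "(g has_field_derivative \<beta>) (at s)"
    and rec: "\<And>j. j \<le> m \<Longrightarrow> \<alpha> * c (Suc j) * of_nat (Suc j) + \<beta> * c j * of_nat (Suc m - j)
                              = r * d j + (if j = 0 then e else 0)"
  shows "((\<lambda>s. wconv P Q c (Suc m) (f s) (g s)) has_field_derivative
           r * wconv P Q d m (f s) (g s) + e * P 0 (f s) * Q m (g s)) (at s)"
proof -
  have "(\<alpha> * c (Suc j) * of_nat (Suc j) + \<beta> * c j * of_nat (Suc m - j)) * P j u * Q (m - j) v
      = r * (d j * P j u * Q (m - j) v) + (if j = 0 then e * P 0 u * Q m v else 0)"
    if "j \<le> m" for j u v
    by (subst rec[OF that]) (simp add: algebra_simps)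
  then have "wconv P Q (\<lambda>j. \<alpha> * c (Suc j) * of_nat (Suc j) + \<beta> * c j * of_nat (Suc m - j)) m u v
      = (\<Sum>j\<le>m. r * (d j * P j u * Q (m - j) v) + (if j = 0 then e * P 0 u * Q m v else 0))" for u v
    unfolding wconv_def by (intro sum.cong) auto
  then show ?thesis
    using wconv_has_field_derivative[OF assms(1-4), of c m]
    by (simp add: wconv_def sum.distrib sum_distrib_left)
qed

lemma wconv_0 [simp]: "wconv P Q c 0 u v = c 0 * P 0 u * Q 0 v"
  by (simp add: wconv_def)

lemma wconv_1 [simp]: "wconv P Q c (Suc 0) u v = c 0 * P 0 u * Q (Suc 0) v + c 1 * P (Suc 0) u * Q 0 v"
  by (simp add: wconv_def)

lemma wconv_eulerpoly_left_0_plus_1: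
  "wconv eulerpoly Q c m 0 v + wconv eulerpoly Q c m 1 v = 2 * c 0 * Q m v"
proof -
  have "wconv eulerpoly Q c m 0 v + wconv eulerpoly Q c m 1 v
      = (\<Sum>k\<le>m. c k * (eulerpoly k 0 + eulerpoly k 1) * Q (m - k) v)"
    unfolding wconv_def sum.distrib[symmetric] by (intro sum.cong) (auto simp: algebra_simps)
  also have "\<dots> = (\<Sum>k\<le>m. if k = 0 then 2 * c 0 * Q m v else 0)"
    by (intro sum.cong) (auto simp: eulerpoly_0_plus_1)
  finally show ?thesis
    by simp
qed

lemma wconv_eulerpoly_right_0_plus_1:
  "wconv P eulerpoly c m u 0 + wconv P eulerpoly c m u 1 = 2 * c m * P m u"
proof -
  have "wconv P eulerpoly c m u 0 + wconv P eulerpoly c m u 1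
      = (\<Sum>k\<le>m. c k * P k u * (eulerpoly (m - k) 0 + eulerpoly (m - k) 1))"
    unfolding wconv_def sum.distrib[symmetric] by (intro sum.cong) (auto simp: algebra_simps)
  also have "\<dots> = (\<Sum>k\<le>m. if k = m then 2 * c m * P m u else 0)"
    by (intro sum.cong) (auto simp: eulerpoly_0_plus_1)
  finally show ?thesis
    by simp
qed

lemma wconv_bernpoly_eulerpoly_10_plus_01:
  assumes "n \<ge> 1"
  shows "wconv bernpoly eulerpoly c n 1 0 + wconv bernpoly eulerpoly c n 0 1
       = c 1 * eulerpoly (n - 1) 0 + 2 * c n * bern n"
proof -
  have summand: "c k * bernpoly k 1 * eulerpoly (n - k) 0 + c k * bernpoly k 0 * eulerpoly (n - k) 1
      = (if k = 1 then c 1 * eulerpoly (n - 1) 0 else 0) + (if k = n then 2 * c n * bern n else 0)"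
    if "k \<le> n" for k
  proof -
    have E1: "eulerpoly (n - k) 1 = (if k = n then 2 else 0) - eulerpoly (n - k) 0"
      using eulerpoly_0_plus_1[of "n - k"] that by (auto simp: algebra_simps)
    show ?thesis
      unfolding E1 using that by (auto simp: bernpoly_at_1 algebra_simps)
  qed
  have "wconv bernpoly eulerpoly c n 1 0 + wconv bernpoly eulerpoly c n 0 1
      = (\<Sum>k\<le>n. (if k = 1 then c 1 * eulerpoly (n - 1) 0 else 0) + (if k = n then 2 * c n * bern n else 0))"
    unfolding wconv_def sum.distrib[symmetric] by (intro sum.cong refl) (rule summand, simp)
  then show ?thesis
    using assms by (simp add: sum.distrib)
qed

lemma bernpoly_1_minus_0: "bernpoly k 1 - bernpoly k 0 = (if k = 1 then 1 else 0)"
  by (simp add: bernpoly_at_1)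

lemma wconv_bernpoly_left_1_minus_0:
  assumes "m \<ge> 1"
  shows "wconv bernpoly Q c m 1 v - wconv bernpoly Q c m 0 v = c 1 * Q (m - 1) v"
proof -
  have "wconv bernpoly Q c m 1 v - wconv bernpoly Q c m 0 v
      = (\<Sum>k\<le>m. c k * (bernpoly k 1 - bernpoly k 0) * Q (m - k) v)"
    unfolding wconv_def sum_subtractf[symmetric] by (intro sum.cong) (auto simp: algebra_simps)
  also have "\<dots> = (\<Sum>k\<le>m. if k = 1 then c 1 * Q (m - 1) v else 0)"
    unfolding bernpoly_1_minus_0 by (intro sum.cong) auto
  finally show ?thesis
    using assms by simp
qed

lemma wconv_bernpoly_right_1_minus_0:
  assumes "m \<ge> 1"
  shows "wconv P bernpoly c m u 1 - wconv P bernpoly c m u 0 = c (m - 1) * P (m - 1) u"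
proof -
  have "wconv P bernpoly c m u 1 - wconv P bernpoly c m u 0
      = (\<Sum>k\<le>m. c k * P k u * (bernpoly (m - k) 1 - bernpoly (m - k) 0))"
    unfolding wconv_def sum_subtractf[symmetric] by (intro sum.cong) (auto simp: algebra_simps)
  also have "\<dots> = (\<Sum>k\<le>m. if k = m - 1 then c (m - 1) * P (m - 1) u else 0)"
    unfolding bernpoly_1_minus_0 using assms by (intro sum.cong) auto
  finally show ?thesis
    using assms by simp
qed

section \<open>Functions invariant on the plane \<open>x + y + z = 1\<close>\<close>

lemma plane_invariant:
  fixes F :: "complex \<Rightarrow> complex \<Rightarrow> complex \<Rightarrow> 'a"
  assumes xz: "\<And>a b c s. a + b + c = 1 \<Longrightarrow> F (a + s) b (c - s) = F a b c"
    and yz: "\<And>a b c s. a + b + c = 1 \<Longrightarrow> F a (b + s) (c - s) = F a b c"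
    and "x + y + z = 1"
  shows "F x y z = F 0 0 1"
proof -
  have "F x y z = F 0 y (z + x)"
    using xz[of 0 y "z + x" x] assms(3) by (simp add: algebra_simps)
  also have "z + x = 1 - y"
    using assms(3) by (simp add: algebra_simps)
  also have "F 0 y (1 - y) = F 0 0 1"
    using yz[of 0 0 1 y] by simp
  finally show ?thesis .
qed

lemma has_field_derivative_0_imp_eq:
  fixes f :: "complex \<Rightarrow> complex"
  assumes "\<And>s. (f has_field_derivative 0) (at s)"
  shows "f a = f b"
  using has_field_derivative_const_imp_diff[OF assms, of a b] by simp

lemma plane_invariant_if_has_field_derivative:
  fixes F G H :: "complex \<Rightarrow> complex \<Rightarrow> complex \<Rightarrow> complex"
  assumes xz: "\<And>a b c s. ((\<lambda>s. F (a + s) b (c - s)) has_field_derivative r * G (a + s) b (c - s)) (at s)"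
    and yz: "\<And>a b c s. ((\<lambda>s. F a (b + s) (c - s)) has_field_derivative r' * H a (b + s) (c - s)) (at s)"
    and G: "\<And>x y z. x + y + z = 1 \<Longrightarrow> G x y z = 0"
    and H: "\<And>x y z. x + y + z = 1 \<Longrightarrow> H x y z = 0"
    and "x + y + z = 1"
  shows "F x y z = F 0 0 1"
proof (rule plane_invariant[OF _ _ assms(5)])
  fix a b c s :: complex
  assume abc: "a + b + c = 1"
  have "G (a + s) b (c - s) = 0" "H a (b + s) (c - s) = 0" for s
    using abc by (auto intro!: G H simp: algebra_simps)
  then have "((\<lambda>s. F (a + s) b (c - s)) has_field_derivative 0) (at s)"
    and "((\<lambda>s. F a (b + s) (c - s)) has_field_derivative 0) (at s)" for s
    using xz[of a b c s] yz[of a b c s] by simp_all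
  from this[THEN has_field_derivative_0_imp_eq, of s 0]
  show "F (a + s) b (c - s) = F a b c" and "F a (b + s) (c - s) = F a b c"
    by simp_all
qed

lemma minus_one_power_pred: "n \<ge> 1 \<Longrightarrow> (-1 :: 'a :: ring_1) ^ n = - ((-1) ^ (n - 1))"
  by (cases n) simp_all

lemma sum_atLeast_1_atMost_eq:
  fixes f :: "nat \<Rightarrow> 'a::comm_monoid_add"
  assumes "f 0 = 0"
  shows "(\<Sum>k=1..n. f k) = (\<Sum>k\<le>n. f k)"
proof -
  have "(\<Sum>k\<le>n. f k) = f 0 + (\<Sum>k=Suc 0..n. f k)"
    unfolding atMost_atLeast0 by (rule sum.atLeast_Suc_atMost) simp
  with assms show ?thesis
    by simp
qed

lemma gbinomial_Suc_absorb: "of_nat (Suc k) * (a gchoose Suc k) = (a - of_nat k) * (a gchoose k)"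
  for a :: "'a :: field_char_0"
  using gbinomial_mult_1[of a k] by (simp add: algebra_simps)

lemma gbinomial_absorb_pred:
  "n \<ge> 1 \<Longrightarrow> of_nat n * (a gchoose n) = (a - of_nat n + 1) * (a gchoose (n - 1))"
  for a :: "'a :: field_char_0"
  using gbinomial_Suc_absorb[of "n - 1" a] by (simp add: of_nat_diff)

lemma gbinomial_absorption_pred:
  "n \<ge> 1 \<Longrightarrow> of_nat n * (a gchoose n) = a * ((a - 1) gchoose (n - 1))"
  for a :: "'a :: field_char_0"
  using gbinomial_absorption[of "n - 1" a] by simp

lemma gbinomial_reflect_div:
  fixes t :: complex
  assumes "t \<noteq> 0" and "of_nat n - t \<noteq> 0"
  shows "((of_nat n - t) gchoose n) / (of_nat n - t) = - ((-1) ^ n * (t gchoose n) / t)"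
proof -
  have "(of_nat n - t) gchoose n = (-1) ^ n * ((t - 1) gchoose n)"
    using gbinomial_negated_upper[of "of_nat n - t" n] by simp
  also have "(t - 1) gchoose n = (t - of_nat n) * (t gchoose n) / t"
    using gbinomial_absorb_comp[of t n] assms(1) by (simp add: field_simps)
  finally show ?thesis
    using assms by (simp add: field_simps)
qed

lemma of_nat_Suc_times_binomial:
  "of_nat (Suc j) * of_nat (n choose Suc j) = (of_nat n * of_nat ((n - 1) choose j) :: 'a :: semiring_1)"
proof -
  have "Suc j * (n choose Suc j) = n * ((n - 1) choose j)"
    by (cases n) (simp, simp only: diff_Suc_1 Suc_times_binomial)
  then show ?thesis
    by (simp only: of_nat_mult[symmetric])
qed

lemma of_nat_binomial_absorb_comp:
  "of_nat (n - j) * of_nat (n choose j) = (of_nat n * of_nat ((n - 1) choose j) :: 'a :: semiring_1)"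
  by (simp only: of_nat_mult[symmetric] binomial_absorb_comp)

lemma of_nat_Suc_diff_neq_0: "j \<le> n \<Longrightarrow> of_nat (Suc n - j) \<noteq> (0 :: 'a :: semiring_char_0)"
  by (simp only: Suc_diff_le of_nat_neq_0 not_False_eq_True)

lemma notin_of_nat_atMost:
  fixes t :: complex
  assumes "t \<notin> of_nat ` {..n}" and "j \<le> n"
  shows "t \<noteq> of_nat j" and "t - of_nat j \<noteq> 0" and "of_nat j - t \<noteq> 0"
proof -
  show "t \<noteq> of_nat j"
    using assms by auto
  then show "t - of_nat j \<noteq> 0" and "of_nat j - t \<noteq> 0"
    by auto
qed

lemma notin_of_nat_atMost_Suc_shift:
  "(t :: complex) \<notin> of_nat ` {..Suc n} \<Longrightarrow> t - 1 \<notin> of_nat ` {..n}"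
proof
  assume "t - 1 \<in> of_nat ` {..n}"
  then obtain j where "j \<le> n" "t - 1 = of_nat j"
    by auto
  then have "Suc j \<in> {..Suc n}" "t = of_nat (Suc j)"
    by (auto simp: algebra_simps)
  moreover assume "t \<notin> of_nat ` {..Suc n}"
  ultimately show False
    by blast
qed

lemma notin_of_nat_atMost_plus_1:
  assumes "(t :: complex) \<notin> of_nat ` {..n}" and "t \<noteq> -1"
  shows "t + 1 \<notin> of_nat ` {..Suc n}"
proof
  assume "t + 1 \<in> of_nat ` {..Suc n}"
  then obtain j where "j \<le> Suc n" "t + 1 = of_nat j"
    by auto
  with assms show False
    by (cases j) (auto simp: algebra_simps eq_neg_iff_add_eq_0)
qed

lemma minus_1_notin_of_nat: "(-1 :: complex) \<notin> of_nat ` A"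
proof -
  have "Re (-1) \<noteq> Re (of_nat j)" for j
    by simp
  then show ?thesis
    by (metis imageE)
qed

section \<open>The first identity\<close>

definition coef1_EE :: "nat \<Rightarrow> complex \<Rightarrow> nat \<Rightarrow> complex" where
  "coef1_EE n t k = (-1) ^ n / 2 * (t gchoose k)"

definition coef1_BE :: "nat \<Rightarrow> complex \<Rightarrow> nat \<Rightarrow> complex" where
  "coef1_BE n t k = ((of_nat n - t) gchoose k) / (of_nat n - t)"

definition coef1_EB :: "nat \<Rightarrow> complex \<Rightarrow> nat \<Rightarrow> complex" where
  "coef1_EB n t k = (t gchoose n) * of_nat (n choose k) / (t - of_nat k)"

definition defect1 :: "nat \<Rightarrow> complex \<Rightarrow> complex \<Rightarrow> complex \<Rightarrow> complex \<Rightarrow> complex" where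
  "defect1 n t x y z = wconv eulerpoly eulerpoly (coef1_EE n t) (n - 1) x y
     - wconv bernpoly eulerpoly (coef1_BE n t) n x z - wconv eulerpoly bernpoly (coef1_EB n t) n z y"

text \<open>The suffixes \<open>_xz\<close>, \<open>_xy\<close> and \<open>_yz\<close> name the direction \<open>(1, 0, -1)\<close>, \<open>(-1, 1, 0)\<close> or
  \<open>(0, 1, -1)\<close> in which a defect is differentiated; the \<open>coef\<close> lemmas so named are the weight
  recurrences that \<open>wconv_has_field_derivative_rec\<close> needs for that direction.\<close>

lemma coef1_EE_Suc_xz: "coef1_EE (Suc n) t (Suc j) * of_nat (Suc j) = - t * coef1_EE n (t - 1) j"
proof -
  \<comment> \<open>Here and below the sign \<open>(-1) ^ n\<close> is abstracted to an atom \<open>p\<close>: the arithmetic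
    automation (in particular \<open>algebra\<close>) cannot work with powers of variable exponent.\<close>
  obtain p where "(-1::complex) ^ n = p"
    by blast
  then show ?thesis
    using gbinomial_absorption[of j t] by (simp add: coef1_EE_def field_simps)
qed

lemma coef1_BE_Suc_xz:
  assumes "of_nat (Suc n) \<noteq> t" and "j \<le> Suc n"
  shows "coef1_BE (Suc n) t (Suc j) * of_nat (Suc j) - coef1_BE (Suc n) t j * of_nat (Suc n - j)
       = - t * coef1_BE n (t - 1) j"
proof -
  define s where "s = of_nat (Suc n) - t"
  have s: "s \<noteq> 0" "of_nat n - (t - 1) = s"
    using assms(1) by (simp_all add: s_def)
  have A: "coef1_BE (Suc n) t (Suc j) * of_nat (Suc j) = (s - of_nat j) * (s gchoose j) / s"
    unfolding coef1_BE_def s_def[symmetric] using gbinomial_Suc_absorb[of j s] by (simp add: mult.commute)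
  have B: "coef1_BE (Suc n) t j * of_nat (Suc n - j) = (s + t - of_nat j) * (s gchoose j) / s"
    unfolding coef1_BE_def s_def[symmetric] using assms(2) by (simp add: s_def of_nat_diff)
  have C: "coef1_BE n (t - 1) j = (s gchoose j) / s"
    unfolding coef1_BE_def s(2) ..
  show ?thesis
    unfolding A B C using s(1) by (simp add: field_simps)
qed

lemma coef1_EB_Suc_xz: "coef1_EB (Suc n) t (Suc j) * of_nat (Suc j) = t * coef1_EB n (t - 1) j"
proof -
  have "of_nat (Suc j) * of_nat (Suc n choose Suc j) = (of_nat (Suc n) * of_nat (n choose j) :: complex)"
    using of_nat_Suc_times_binomial[of j "Suc n"] by simp
  moreover have "of_nat (Suc n) * (t gchoose Suc n) = t * ((t - 1) gchoose n)"
    by (rule gbinomial_absorption)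
  moreover have "t - of_nat (Suc j) = t - 1 - of_nat j"
    by simp
  ultimately show ?thesis
    unfolding coef1_EB_def by (metis (no_types, lifting) mult.assoc mult.commute times_divide_eq_left)
qed

lemma coef1_EE_Suc_xy:
  assumes "j \<le> n"
  shows "coef1_EE (Suc n) t j * of_nat (n - j) - coef1_EE (Suc n) t (Suc j) * of_nat (Suc j)
       = - (of_nat n - t) * coef1_EE n t j"
proof -
  obtain p where p: "(-1::complex) ^ n = p"
    by blast
  show ?thesis
    using gbinomial_Suc_absorb[of j t] assms unfolding coef1_EE_def power_Suc p
    by (simp add: of_nat_diff field_simps) algebra
qed

lemma coef1_BE_Suc_xy:
  assumes "of_nat (Suc n) \<noteq> t" and "of_nat n \<noteq> t"
  shows "coef1_BE (Suc n) t (Suc j) * of_nat (Suc j) = (of_nat n - t) * coef1_BE n t j"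
proof -
  define s where "s = of_nat (Suc n) - t"
  have s: "s \<noteq> 0" "s - 1 \<noteq> 0" "of_nat n - t = s - 1"
    using assms by (simp_all add: s_def)
  have "coef1_BE (Suc n) t (Suc j) * of_nat (Suc j) = ((s - 1) gchoose j)"
    unfolding coef1_BE_def s_def[symmetric] using gbinomial_absorption[of j s] s(1)
    by (simp add: field_simps)
  also have "\<dots> = (of_nat n - t) * coef1_BE n t j"
    unfolding coef1_BE_def s(3) using s(2) by simp
  finally show ?thesis .
qed

lemma coef1_EB_Suc_xy:
  "coef1_EB (Suc n) t j * of_nat (Suc n - j) = - (of_nat n - t) * coef1_EB n t j"
proof -
  have "of_nat (Suc n - j) * of_nat (Suc n choose j) = (of_nat (Suc n) * of_nat (n choose j) :: complex)"
    using of_nat_binomial_absorb_comp[of "Suc n" j] by simp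
  moreover have "of_nat (Suc n) * (t gchoose Suc n) = (t - of_nat n) * (t gchoose n)"
    by (rule gbinomial_Suc_absorb)
  ultimately have key: "(t gchoose Suc n) * of_nat (Suc n choose j) * of_nat (Suc n - j)
      = - (of_nat n - t) * ((t gchoose n) * of_nat (n choose j))"
    by algebra
  have "coef1_EB (Suc n) t j * of_nat (Suc n - j)
      = (t gchoose Suc n) * of_nat (Suc n choose j) * of_nat (Suc n - j) / (t - of_nat j)"
    by (simp add: coef1_EB_def)
  also have "\<dots> = - (of_nat n - t) * coef1_EB n t j"
    by (simp only: key coef1_EB_def times_divide_eq_right)
  finally show ?thesis .
qed

lemma defect1_has_field_derivative_xz:
  assumes "n \<ge> 1" and t: "t \<notin> of_nat ` {..Suc n}"
  shows "((\<lambda>s. defect1 (Suc n) t (a + s) b (c - s)) has_field_derivative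
           - t * defect1 n (t - 1) (a + s) b (c - s)) (at s)"
proof -
  obtain m where m: "n = Suc m"
    using assms(1) by (cases n) auto
  have x: "((\<lambda>s. a + s) has_field_derivative 1) (at s)"
    and y: "((\<lambda>s. b) has_field_derivative 0) (at s)"
    and z: "((\<lambda>s. c - s) has_field_derivative -1) (at s)"
    by (auto intro!: derivative_eq_intros)
  have EE: "((\<lambda>s. wconv eulerpoly eulerpoly (coef1_EE (Suc n) t) (Suc m) (a + s) b) has_field_derivative
      - t * wconv eulerpoly eulerpoly (coef1_EE n (t - 1)) m (a + s) b + 0 * eulerpoly 0 (a + s) * eulerpoly m b)
      (at s)"
    apply (rule wconv_has_field_derivative_rec[OF appell_seq_eulerpoly appell_seq_eulerpoly x y])
    subgoal for j
      using coef1_EE_Suc_xz[of n t j] by simp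
    done
  have BE: "((\<lambda>s. wconv bernpoly eulerpoly (coef1_BE (Suc n) t) (Suc n) (a + s) (c - s))
      has_field_derivative - t * wconv bernpoly eulerpoly (coef1_BE n (t - 1)) n (a + s) (c - s)
        + 0 * bernpoly 0 (a + s) * eulerpoly n (c - s)) (at s)"
    apply (rule wconv_has_field_derivative_rec[OF appell_seq_bernpoly appell_seq_eulerpoly x z])
    subgoal for j
      using coef1_BE_Suc_xz[of n t j] notin_of_nat_atMost(1)[OF t, of "Suc n"] by simp
    done
  have EB: "((\<lambda>s. wconv eulerpoly bernpoly (coef1_EB (Suc n) t) (Suc n) (c - s) b) has_field_derivative
      - t * wconv eulerpoly bernpoly (coef1_EB n (t - 1)) n (c - s) b + 0 * eulerpoly 0 (c - s) * bernpoly n b)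
      (at s)"
    apply (rule wconv_has_field_derivative_rec[OF appell_seq_eulerpoly appell_seq_bernpoly z y])
    subgoal for j
      using coef1_EB_Suc_xz[of n t j] by simp
    done
  from DERIV_diff[OF DERIV_diff[OF EE BE] EB] show ?thesis
    unfolding defect1_def using m by (simp add: algebra_simps)
qed

lemma defect1_has_field_derivative_xy:
  assumes "n \<ge> 1" and t: "t \<notin> of_nat ` {..Suc n}"
  shows "((\<lambda>s. defect1 (Suc n) t (a - s) (b + s) c) has_field_derivative
           - (of_nat n - t) * defect1 n t (a - s) (b + s) c) (at s)"
proof -
  obtain m where m: "n = Suc m"
    using assms(1) by (cases n) auto
  have tn: "of_nat (Suc n) \<noteq> t" "of_nat n \<noteq> t"
    using notin_of_nat_atMost(1)[OF t, of "Suc n"] notin_of_nat_atMost(1)[OF t, of n] by auto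
  have x: "((\<lambda>s. a - s) has_field_derivative -1) (at s)"
    and y: "((\<lambda>s. b + s) has_field_derivative 1) (at s)"
    and z: "((\<lambda>s. c) has_field_derivative 0) (at s)"
    by (auto intro!: derivative_eq_intros)
  have EE: "((\<lambda>s. wconv eulerpoly eulerpoly (coef1_EE (Suc n) t) (Suc m) (a - s) (b + s)) has_field_derivative
      - (of_nat n - t) * wconv eulerpoly eulerpoly (coef1_EE n t) m (a - s) (b + s)
        + 0 * eulerpoly 0 (a - s) * eulerpoly m (b + s)) (at s)"
    apply (rule wconv_has_field_derivative_rec[OF appell_seq_eulerpoly appell_seq_eulerpoly x y])
    subgoal for j
      using coef1_EE_Suc_xy[of j n t] by (simp add: m)
    done
  have BE: "((\<lambda>s. wconv bernpoly eulerpoly (coef1_BE (Suc n) t) (Suc n) (a - s) c) has_field_derivative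
      - (of_nat n - t) * wconv bernpoly eulerpoly (coef1_BE n t) n (a - s) c
        + 0 * bernpoly 0 (a - s) * eulerpoly n c) (at s)"
    apply (rule wconv_has_field_derivative_rec[OF appell_seq_bernpoly appell_seq_eulerpoly x z])
    subgoal for j
      using coef1_BE_Suc_xy[OF tn, of j] by (simp; simp add: algebra_simps)
    done
  have EB: "((\<lambda>s. wconv eulerpoly bernpoly (coef1_EB (Suc n) t) (Suc n) c (b + s)) has_field_derivative
      - (of_nat n - t) * wconv eulerpoly bernpoly (coef1_EB n t) n c (b + s)
        + 0 * eulerpoly 0 c * bernpoly n (b + s)) (at s)"
    apply (rule wconv_has_field_derivative_rec[OF appell_seq_eulerpoly appell_seq_bernpoly z y])
    subgoal for j
      using coef1_EB_Suc_xy[of n t j] by simp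
    done
  from DERIV_diff[OF DERIV_diff[OF EE BE] EB] show ?thesis
    unfolding defect1_def using m by (simp add: algebra_simps)
qed

lemma defect1_1:
  assumes "t \<notin> of_nat ` {..1}" and "x + y + z = 1"
  shows "defect1 1 t x y z = 0"
proof -
  define u where "u = 1 - t"
  have t: "t = 1 - u" and "u \<noteq> 0" "1 - u \<noteq> 0"
    using notin_of_nat_atMost[OF assms(1), of 0] notin_of_nat_atMost[OF assms(1), of 1] by (auto simp: u_def)
  then have "defect1 1 t x y z = 1 - (x + y + z)"
    unfolding t by (simp add: defect1_def coef1_EE_def coef1_BE_def coef1_EB_def field_simps)
  with assms(2) show ?thesis
    by simp
qed

lemma defect1_100_plus_001:
  assumes "n \<ge> 1" and t: "t \<notin> of_nat ` {..n}"
  shows "defect1 n t 1 0 0 + defect1 n t 0 0 1 = 0"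
proof -
  have t0: "t \<noteq> 0" and tn: "of_nat n - t \<noteq> 0"
    using notin_of_nat_atMost[OF t, of 0] notin_of_nat_atMost[OF t, of n] by auto
  have "defect1 n t 1 0 0 + defect1 n t 0 0 1
      = (wconv eulerpoly eulerpoly (coef1_EE n t) (n - 1) 0 0 + wconv eulerpoly eulerpoly (coef1_EE n t) (n - 1) 1 0)
      - (wconv bernpoly eulerpoly (coef1_BE n t) n 1 0 + wconv bernpoly eulerpoly (coef1_BE n t) n 0 1)
      - (wconv eulerpoly bernpoly (coef1_EB n t) n 0 0 + wconv eulerpoly bernpoly (coef1_EB n t) n 1 0)"
    unfolding defect1_def by (simp add: algebra_simps)
  also have "\<dots> = 2 * coef1_EE n t 0 * eulerpoly (n - 1) 0
      - (coef1_BE n t 1 * eulerpoly (n - 1) 0 + 2 * coef1_BE n t n * bern n) - 2 * coef1_EB n t 0 * bern n"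
    unfolding wconv_eulerpoly_left_0_plus_1 wconv_bernpoly_eulerpoly_10_plus_01[OF assms(1)] by simp
  also have "\<dots> = ((-1) ^ n - 1) * eulerpoly (n - 1) 0
      - 2 * bern n * (((of_nat n - t) gchoose n) / (of_nat n - t) + (t gchoose n) / t)"
    using t0 tn by (simp add: coef1_EE_def coef1_BE_def coef1_EB_def field_simps)
  also have "\<dots> = ((-1) ^ n - 1) * eulerpoly (n - 1) 0 - 2 * bern n * ((1 - (-1) ^ n) * (t gchoose n) / t)"
    using t0 by (simp add: gbinomial_reflect_div[OF t0 tn] field_simps)
  also have "\<dots> = 0"
  proof (cases "even n")
    case False
    then consider "n = 1" | "even (n - 1)" "n \<noteq> 1"
      by (cases "n = 1") auto
    then show ?thesis
    proof cases
      case 2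
      then show ?thesis
        using False assms(1) bern_odd_eq_0[of n] eulerpoly_even_at_0[of "n - 1"] by simp
    qed (use t0 in simp)
  qed simp
  finally show ?thesis .
qed

lemma defect1_eq_0:
  assumes "n \<ge> 1" and "t \<notin> of_nat ` {..n}" and "x + y + z = 1"
  shows "defect1 n t x y z = 0"
  using assms
proof (induction n arbitrary: t x y z rule: nat_induct_at_least)
  case base
  then show ?case
    by (rule defect1_1)
next
  case (Suc n)
  have "t \<notin> of_nat ` {..n}" "t - 1 \<notin> of_nat ` {..n}"
    using Suc.prems(1) notin_of_nat_atMost_Suc_shift by auto
  then have IH: "defect1 n t' a b c = 0" if "t' = t \<or> t' = t - 1" and "a + b + c = 1" for t' a b c
    using Suc.IH[of t' a b c] that by auto
  have xz: "defect1 (Suc n) t (a + s) b (c - s) = defect1 (Suc n) t a b c" if "a + b + c = 1" for a b c s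
  proof -
    have "defect1 n (t - 1) (a + s) b (c - s) = 0" for s
      by (rule IH) (use that in \<open>simp_all add: algebra_simps\<close>)
    then have "((\<lambda>s. defect1 (Suc n) t (a + s) b (c - s)) has_field_derivative 0) (at s)" for s
      using defect1_has_field_derivative_xz[OF Suc.hyps Suc.prems(1), where a = a and b = b and c = c] by simp
    from has_field_derivative_0_imp_eq[OF this, of s 0] show ?thesis
      by simp
  qed
  have xy: "defect1 (Suc n) t (a - s) (b + s) c = defect1 (Suc n) t a b c" if "a + b + c = 1" for a b c s
  proof -
    have "defect1 n t (a - s) (b + s) c = 0" for s
      by (rule IH) (use that in \<open>simp_all add: algebra_simps\<close>)
    then have "((\<lambda>s. defect1 (Suc n) t (a - s) (b + s) c) has_field_derivative 0) (at s)" for s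
      using defect1_has_field_derivative_xy[OF Suc.hyps Suc.prems(1), where a = a and b = b and c = c] by simp
    from has_field_derivative_0_imp_eq[OF this, of s 0] show ?thesis
      by simp
  qed
  have yz: "defect1 (Suc n) t a (b + s) (c - s) = defect1 (Suc n) t a b c" if "a + b + c = 1" for a b c s
    using xz[of "a - s" "b + s" c s] xy[of a b c s] that by (simp add: algebra_simps)
  have "defect1 (Suc n) t 1 0 0 = defect1 (Suc n) t 0 0 1"
    by (rule plane_invariant[OF xz yz]) simp_all
  moreover have "defect1 (Suc n) t x y z = defect1 (Suc n) t 0 0 1"
    by (rule plane_invariant[OF xz yz Suc.prems(2)])
  ultimately show ?case
    using defect1_100_plus_001[of "Suc n" t] Suc.prems(1) by simp
qed

lemma identity1:
  assumes "n > 0" and "x + y + z = 1" and "t \<notin> of_nat ` {..n}"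
  shows "(-1) ^ n / 2 * (\<Sum>k<n. (t gchoose k) * eulerpoly k x * eulerpoly (n - 1 - k) y)
     = 1 / (of_nat n - t) * (\<Sum>k\<le>n. ((of_nat n - t) gchoose k) * bernpoly k x * eulerpoly (n - k) z)
       + (t gchoose n) * (\<Sum>k\<le>n. of_nat (n choose k) * eulerpoly k z / (t - of_nat k) * bernpoly (n - k) y)"
proof -
  have "{..<n} = {..n - 1}"
    using assms(1) by auto
  then have EE: "(-1) ^ n / 2 * (\<Sum>k<n. (t gchoose k) * eulerpoly k x * eulerpoly (n - 1 - k) y)
      = wconv eulerpoly eulerpoly (coef1_EE n t) (n - 1) x y"
    by (simp add: wconv_def coef1_EE_def sum_distrib_left mult_ac)
  have BE: "1 / (of_nat n - t) * (\<Sum>k\<le>n. ((of_nat n - t) gchoose k) * bernpoly k x * eulerpoly (n - k) z)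
      = wconv bernpoly eulerpoly (coef1_BE n t) n x z"
    by (simp add: wconv_def coef1_BE_def sum_distrib_left mult_ac)
  have EB: "(t gchoose n) * (\<Sum>k\<le>n. of_nat (n choose k) * eulerpoly k z / (t - of_nat k) * bernpoly (n - k) y)
      = wconv eulerpoly bernpoly (coef1_EB n t) n z y"
    by (simp add: wconv_def coef1_EB_def sum_distrib_left mult_ac)
  have "defect1 n t x y z = 0"
    using defect1_eq_0 assms by simp
  then show ?thesis
    unfolding EE BE EB defect1_def by (simp add: algebra_simps)
qed

section \<open>The second identity\<close>

definition coef2_EE :: "nat \<Rightarrow> complex \<Rightarrow> nat \<Rightarrow> complex" where
  "coef2_EE n t k = of_nat n / 2 * (t gchoose n) * of_nat ((n - 1) choose k) / (t - of_nat k)"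

definition coef2_E :: "nat \<Rightarrow> complex \<Rightarrow> complex" where
  "coef2_E n t = (-1) ^ n * (t gchoose n) * (\<Sum>k<n. 1 / (t - of_nat k))"

text \<open>In \<open>coef2_BE_y\<close>, \<open>coef2_BE_x\<close>, \<open>coef3_BB_y\<close> and \<open>coef3_BB_x\<close> the term \<open>k = 0\<close> vanishes
  because \<open>x / 0 = 0\<close>; this matches the sums over \<open>{1..n}\<close> in the identities.\<close>

definition coef2_BE_y :: "nat \<Rightarrow> complex \<Rightarrow> nat \<Rightarrow> complex" where
  "coef2_BE_y n t k = (-1) ^ n * (t gchoose (n - k)) / of_nat k"

definition coef2_BE_x :: "nat \<Rightarrow> complex \<Rightarrow> nat \<Rightarrow> complex" where
  "coef2_BE_x n t k = ((of_nat n - 1 - t) gchoose (n - k)) / of_nat k"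

definition defect2 :: "nat \<Rightarrow> complex \<Rightarrow> complex \<Rightarrow> complex \<Rightarrow> complex \<Rightarrow> complex" where
  "defect2 n t x y z = wconv eulerpoly eulerpoly (coef2_EE n t) (n - 1) x y - coef2_E n t * eulerpoly n z
     - wconv bernpoly eulerpoly (coef2_BE_y n t) n y z + wconv bernpoly eulerpoly (coef2_BE_x n t) n x z"

lemma coef2_EE_Suc_xz: "coef2_EE (Suc n) t (Suc j) * of_nat (Suc j) = t * coef2_EE n (t - 1) j"
proof -
  have "of_nat (Suc j) * of_nat (n choose Suc j) = (of_nat n * of_nat ((n - 1) choose j) :: complex)"
    by (rule of_nat_Suc_times_binomial)
  moreover have "of_nat (Suc n) * (t gchoose Suc n) = t * ((t - 1) gchoose n)"
    by (rule gbinomial_absorption)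
  moreover have "t - of_nat (Suc j) = t - 1 - of_nat j"
    by simp
  ultimately show ?thesis
    unfolding coef2_EE_def by (simp only: diff_Suc_1) (simp add: field_simps, algebra)
qed

lemma coef2_EE_Suc_yz: "coef2_EE (Suc n) t j * of_nat (n - j) = (t - of_nat n) * coef2_EE n t j"
proof -
  have "of_nat (n - j) * of_nat (n choose j) = (of_nat n * of_nat ((n - 1) choose j) :: complex)"
    by (rule of_nat_binomial_absorb_comp)
  moreover have "of_nat (Suc n) * (t gchoose Suc n) = (t - of_nat n) * (t gchoose n)"
    by (rule gbinomial_Suc_absorb)
  ultimately show ?thesis
    unfolding coef2_EE_def by (simp only: diff_Suc_1) (simp add: field_simps, algebra)
qed

lemma coef2_BE_y_Suc_xz:
  assumes "j \<le> n"
  shows "- (coef2_BE_y (Suc n) t j * of_nat (Suc n - j)) = t * coef2_BE_y n (t - 1) j"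
proof (cases "j = 0")
  case False
  have "of_nat (Suc n - j) * (t gchoose (Suc n - j)) = t * ((t - 1) gchoose (n - j))"
    using gbinomial_absorption[of "n - j" t] assms by (simp add: Suc_diff_le)
  moreover obtain p where p: "(-1::complex) ^ n = p"
    by blast
  ultimately show ?thesis
    unfolding coef2_BE_y_def power_Suc p using False by (simp add: field_simps)
qed (simp add: coef2_BE_y_def)

lemma coef2_BE_y_Suc_yz:
  assumes "j \<le> n"
  shows "coef2_BE_y (Suc n) t (Suc j) * of_nat (Suc j) - coef2_BE_y (Suc n) t j * of_nat (Suc n - j)
       = (t - of_nat n) * coef2_BE_y n t j + (if j = 0 then (-1) ^ Suc n * (t gchoose n) else 0)"
proof (cases "j = 0")
  case False
  obtain p where p: "(-1::complex) ^ n = p"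
    by blast
  have A: "coef2_BE_y (Suc n) t (Suc j) * of_nat (Suc j) = - p * (t gchoose (n - j))"
    by (simp add: coef2_BE_y_def p del: of_nat_Suc)
  have "of_nat (Suc n - j) * (t gchoose (Suc n - j)) = (t - of_nat n + of_nat j) * (t gchoose (n - j))"
    using gbinomial_Suc_absorb[of "n - j" t] assms by (simp add: Suc_diff_le of_nat_diff)
  then have B: "coef2_BE_y (Suc n) t j * of_nat (Suc n - j)
      = - p * (t - of_nat n + of_nat j) * (t gchoose (n - j)) / of_nat j"
    unfolding coef2_BE_y_def power_Suc p by (simp add: mult_ac)
  have C: "coef2_BE_y n t j = p * (t gchoose (n - j)) / of_nat j"
    by (simp add: coef2_BE_y_def p)
  show ?thesis
    unfolding A B C using False by (simp add: field_simps)
qed (simp add: coef2_BE_y_def)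

lemma coef2_BE_x_Suc_xz:
  assumes "j \<le> n"
  shows "coef2_BE_x (Suc n) t (Suc j) * of_nat (Suc j) - coef2_BE_x (Suc n) t j * of_nat (Suc n - j)
       = t * coef2_BE_x n (t - 1) j + (if j = 0 then (-1) ^ n * ((t - 1) gchoose n) else 0)"
proof -
  define u where "u = of_nat n - t"
  have u: "of_nat (Suc n) - 1 - t = u" "of_nat n - 1 - (t - 1) = u"
    by (simp_all add: u_def)
  have A: "coef2_BE_x (Suc n) t (Suc j) * of_nat (Suc j) = (u gchoose (n - j))"
    unfolding coef2_BE_x_def u by (simp del: of_nat_Suc)
  show ?thesis
  proof (cases "j = 0")
    case True
    have "(u gchoose n) = (-1) ^ n * ((t - 1) gchoose n)"
      using gbinomial_negated_upper[of u n] by (simp add: u_def)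
    with True show ?thesis
      unfolding A by (simp add: coef2_BE_x_def)
  next
    case False
    have "of_nat (Suc n - j) * (u gchoose (Suc n - j)) = (u - of_nat n + of_nat j) * (u gchoose (n - j))"
      using gbinomial_Suc_absorb[of "n - j" u] assms by (simp add: Suc_diff_le of_nat_diff)
    then have B: "coef2_BE_x (Suc n) t j * of_nat (Suc n - j)
        = (u - of_nat n + of_nat j) * (u gchoose (n - j)) / of_nat j"
      unfolding coef2_BE_x_def u by (simp add: mult_ac)
    have C: "coef2_BE_x n (t - 1) j = (u gchoose (n - j)) / of_nat j"
      unfolding coef2_BE_x_def u ..
    show ?thesis
      unfolding A B C using False by (simp add: field_simps) (simp add: u_def algebra_simps)
  qed
qed

lemma coef2_BE_x_Suc_yz:
  assumes "j \<le> n"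
  shows "- (coef2_BE_x (Suc n) t j * of_nat (Suc n - j)) = (t - of_nat n) * coef2_BE_x n t j"
proof (cases "j = 0")
  case False
  define u where "u = of_nat n - t"
  have u: "of_nat (Suc n) - 1 - t = u" "of_nat n - 1 - t = u - 1"
    by (simp_all add: u_def)
  have "of_nat (Suc n - j) * (u gchoose (Suc n - j)) = u * ((u - 1) gchoose (n - j))"
    using gbinomial_absorption[of "n - j" u] assms by (simp add: Suc_diff_le)
  then show ?thesis
    unfolding coef2_BE_x_def u using False by (simp add: field_simps) (simp add: u_def algebra_simps)
qed (simp add: coef2_BE_x_def)

lemma coef2_E_Suc_xz:
  assumes "t \<noteq> 0"
  shows "t * coef2_E n (t - 1) + (-1) ^ n * ((t - 1) gchoose n) = - (of_nat (Suc n) * coef2_E (Suc n) t)"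
proof -
  have "of_nat (Suc n) * (t gchoose Suc n) = t * ((t - 1) gchoose n)"
    by (rule gbinomial_absorption)
  moreover have "(\<Sum>k<Suc n. 1 / (t - of_nat k)) = 1 / t + (\<Sum>k<n. 1 / (t - 1 - of_nat k))"
    by (subst sum.lessThan_Suc_shift) (simp add: diff_diff_eq)
  moreover obtain p where p: "(-1::complex) ^ n = p"
    by blast
  ultimately show ?thesis
    unfolding coef2_E_def power_Suc p using assms by (simp add: field_simps) algebra
qed

lemma coef2_E_Suc_yz:
  assumes "t - of_nat n \<noteq> 0"
  shows "(t - of_nat n) * coef2_E n t - (-1) ^ Suc n * (t gchoose n) = - (of_nat (Suc n) * coef2_E (Suc n) t)"
proof -
  have "of_nat (Suc n) * (t gchoose Suc n) = (t - of_nat n) * (t gchoose n)"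
    by (rule gbinomial_Suc_absorb)
  moreover have "(\<Sum>k<Suc n. 1 / (t - of_nat k)) = (\<Sum>k<n. 1 / (t - of_nat k)) + 1 / (t - of_nat n)"
    by simp
  moreover obtain p where p: "(-1::complex) ^ n = p"
    by blast
  ultimately show ?thesis
    unfolding coef2_E_def power_Suc p using assms by (simp add: field_simps) algebra
qed

lemma defect2_has_field_derivative_xz:
  assumes "n \<ge> 1" and t: "t \<notin> of_nat ` {..Suc n}"
  shows "((\<lambda>s. defect2 (Suc n) t (a + s) b (c - s)) has_field_derivative
           t * defect2 n (t - 1) (a + s) b (c - s)) (at s)"
proof -
  obtain m where m: "n = Suc m"
    using assms(1) by (cases n) auto
  have x: "((\<lambda>s. a + s) has_field_derivative 1) (at s)"
    and y: "((\<lambda>s. b) has_field_derivative 0) (at s)"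
    and z: "((\<lambda>s. c - s) has_field_derivative -1) (at s)"
    by (auto intro!: derivative_eq_intros)
  have EE: "((\<lambda>s. wconv eulerpoly eulerpoly (coef2_EE (Suc n) t) (Suc m) (a + s) b) has_field_derivative
      t * wconv eulerpoly eulerpoly (coef2_EE n (t - 1)) m (a + s) b + 0 * eulerpoly 0 (a + s) * eulerpoly m b)
      (at s)"
    apply (rule wconv_has_field_derivative_rec[OF appell_seq_eulerpoly appell_seq_eulerpoly x y])
    subgoal for j
      using coef2_EE_Suc_xz[of n t j] by simp
    done
  have E_val: "coef2_E (Suc n) t * (-1 * of_nat (Suc n) * eulerpoly n (c - s))
      = (t * coef2_E n (t - 1) + (-1) ^ n * ((t - 1) gchoose n)) * eulerpoly n (c - s)"
    unfolding coef2_E_Suc_xz[OF notin_of_nat_atMost(1)[OF t, of 0, simplified]] by (simp add: algebra_simps)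
  have E: "((\<lambda>s. coef2_E (Suc n) t * eulerpoly (Suc n) (c - s)) has_field_derivative
      (t * coef2_E n (t - 1) + (-1) ^ n * ((t - 1) gchoose n)) * eulerpoly n (c - s)) (at s)"
    using DERIV_cmult[OF appell_seq_chain[OF appell_seq_eulerpoly z, of "Suc n"], of "coef2_E (Suc n) t"]
    unfolding diff_Suc_1 E_val .
  have BE_y: "((\<lambda>s. wconv bernpoly eulerpoly (coef2_BE_y (Suc n) t) (Suc n) b (c - s)) has_field_derivative
      t * wconv bernpoly eulerpoly (coef2_BE_y n (t - 1)) n b (c - s) + 0 * bernpoly 0 b * eulerpoly n (c - s))
      (at s)"
    apply (rule wconv_has_field_derivative_rec[OF appell_seq_bernpoly appell_seq_eulerpoly y z])
    subgoal for j
      using coef2_BE_y_Suc_xz[of j n t] by simp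
    done
  have BE_x: "((\<lambda>s. wconv bernpoly eulerpoly (coef2_BE_x (Suc n) t) (Suc n) (a + s) (c - s))
      has_field_derivative t * wconv bernpoly eulerpoly (coef2_BE_x n (t - 1)) n (a + s) (c - s)
        + (-1) ^ n * ((t - 1) gchoose n) * bernpoly 0 (a + s) * eulerpoly n (c - s)) (at s)"
    apply (rule wconv_has_field_derivative_rec[OF appell_seq_bernpoly appell_seq_eulerpoly x z])
    subgoal for j
      using coef2_BE_x_Suc_xz[of j n t] by simp
    done
  from DERIV_add[OF DERIV_diff[OF DERIV_diff[OF EE E] BE_y] BE_x] show ?thesis
    unfolding defect2_def using m by (simp add: algebra_simps)
qed

lemma defect2_has_field_derivative_yz:
  assumes "n \<ge> 1" and t: "t \<notin> of_nat ` {..Suc n}"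
  shows "((\<lambda>s. defect2 (Suc n) t a (b + s) (c - s)) has_field_derivative
           (t - of_nat n) * defect2 n t a (b + s) (c - s)) (at s)"
proof -
  obtain m where m: "n = Suc m"
    using assms(1) by (cases n) auto
  have x: "((\<lambda>s. a) has_field_derivative 0) (at s)"
    and y: "((\<lambda>s. b + s) has_field_derivative 1) (at s)"
    and z: "((\<lambda>s. c - s) has_field_derivative -1) (at s)"
    by (auto intro!: derivative_eq_intros)
  have EE: "((\<lambda>s. wconv eulerpoly eulerpoly (coef2_EE (Suc n) t) (Suc m) a (b + s)) has_field_derivative
      (t - of_nat n) * wconv eulerpoly eulerpoly (coef2_EE n t) m a (b + s) + 0 * eulerpoly 0 a * eulerpoly m (b + s))
      (at s)"
    apply (rule wconv_has_field_derivative_rec[OF appell_seq_eulerpoly appell_seq_eulerpoly x y])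
    subgoal for j
      using coef2_EE_Suc_yz[of n t j] by (simp add: m)
    done
  have tn: "t - of_nat n \<noteq> 0"
    using notin_of_nat_atMost(2)[OF t, of n] by simp
  have E_val: "coef2_E (Suc n) t * (-1 * of_nat (Suc n) * eulerpoly n (c - s))
      = ((t - of_nat n) * coef2_E n t - (-1) ^ Suc n * (t gchoose n)) * eulerpoly n (c - s)"
    unfolding coef2_E_Suc_yz[OF tn] by (simp add: algebra_simps)
  have E: "((\<lambda>s. coef2_E (Suc n) t * eulerpoly (Suc n) (c - s)) has_field_derivative
      ((t - of_nat n) * coef2_E n t - (-1) ^ Suc n * (t gchoose n)) * eulerpoly n (c - s)) (at s)"
    using DERIV_cmult[OF appell_seq_chain[OF appell_seq_eulerpoly z, of "Suc n"], of "coef2_E (Suc n) t"]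
    unfolding diff_Suc_1 E_val .
  have BE_y: "((\<lambda>s. wconv bernpoly eulerpoly (coef2_BE_y (Suc n) t) (Suc n) (b + s) (c - s))
      has_field_derivative (t - of_nat n) * wconv bernpoly eulerpoly (coef2_BE_y n t) n (b + s) (c - s)
        + (-1) ^ Suc n * (t gchoose n) * bernpoly 0 (b + s) * eulerpoly n (c - s)) (at s)"
    apply (rule wconv_has_field_derivative_rec[OF appell_seq_bernpoly appell_seq_eulerpoly y z])
    subgoal for j
      using coef2_BE_y_Suc_yz[of j n t] by simp
    done
  have BE_x: "((\<lambda>s. wconv bernpoly eulerpoly (coef2_BE_x (Suc n) t) (Suc n) a (c - s)) has_field_derivative
      (t - of_nat n) * wconv bernpoly eulerpoly (coef2_BE_x n t) n a (c - s) + 0 * bernpoly 0 a * eulerpoly n (c - s))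
      (at s)"
    apply (rule wconv_has_field_derivative_rec[OF appell_seq_bernpoly appell_seq_eulerpoly x z])
    subgoal for j
      using coef2_BE_x_Suc_yz[of j n t] by simp
    done
  from DERIV_add[OF DERIV_diff[OF DERIV_diff[OF EE E] BE_y] BE_x] show ?thesis
    unfolding defect2_def using m by (simp add: algebra_simps)
qed

lemma defect2_1:
  assumes "t \<notin> of_nat ` {..1}" and "x + y + z = 1"
  shows "defect2 1 t x y z = 0"
proof -
  have "t \<noteq> 0"
    using notin_of_nat_atMost[OF assms(1), of 0] by auto
  then have "defect2 1 t x y z = (x + y + z) - 1"
    by (simp add: defect2_def coef2_EE_def coef2_E_def coef2_BE_y_def coef2_BE_x_def)
  with assms(2) show ?thesis
    by simp
qed

lemma defect2_100_plus_001_eq: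
  assumes "n \<ge> 1" and "t \<noteq> 0"
  shows "defect2 n t 1 0 0 + defect2 n t 0 0 1
       = ((t - 1) gchoose (n - 1)) * eulerpoly (n - 1) 0 * (1 + (-1) ^ (n - 1))
         + 2 * bern n / of_nat n * (1 - (-1) ^ n)"
proof -
  have "defect2 n t 1 0 0 + defect2 n t 0 0 1
      = (wconv eulerpoly eulerpoly (coef2_EE n t) (n - 1) 0 0 + wconv eulerpoly eulerpoly (coef2_EE n t) (n - 1) 1 0)
      - coef2_E n t * (eulerpoly n 0 + eulerpoly n 1)
      - (wconv bernpoly eulerpoly (coef2_BE_y n t) n 0 0 + wconv bernpoly eulerpoly (coef2_BE_y n t) n 0 1)
      + (wconv bernpoly eulerpoly (coef2_BE_x n t) n 1 0 + wconv bernpoly eulerpoly (coef2_BE_x n t) n 0 1)"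
    unfolding defect2_def by (simp add: algebra_simps)
  also have "\<dots> = 2 * coef2_EE n t 0 * eulerpoly (n - 1) 0 - 2 * coef2_BE_y n t n * bern n
      + (coef2_BE_x n t 1 * eulerpoly (n - 1) 0 + 2 * coef2_BE_x n t n * bern n)"
    unfolding wconv_eulerpoly_left_0_plus_1 wconv_eulerpoly_right_0_plus_1 eulerpoly_0_plus_1
      wconv_bernpoly_eulerpoly_10_plus_01[OF assms(1)] using assms(1) by simp
  also have "2 * coef2_EE n t 0 = ((t - 1) gchoose (n - 1))"
    using gbinomial_absorption_pred[OF assms(1), of t] assms(2) by (simp add: coef2_EE_def field_simps)
  also have "coef2_BE_x n t 1 = (-1) ^ (n - 1) * ((t - 1) gchoose (n - 1))"
    using gbinomial_negated_upper[of "of_nat n - 1 - t" "n - 1"] assms(1)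
    by (simp add: coef2_BE_x_def of_nat_diff)
  also have "2 * coef2_BE_y n t n = 2 * (-1) ^ n / of_nat n"
    by (simp add: coef2_BE_y_def)
  also have "2 * coef2_BE_x n t n = 2 / of_nat n"
    by (simp add: coef2_BE_x_def)
  finally show ?thesis
    by (simp add: algebra_simps diff_divide_distrib)
qed

lemma defect2_100_plus_001:
  assumes "n \<ge> 1" and t: "t \<notin> of_nat ` {..n}"
  shows "defect2 n t 1 0 0 + defect2 n t 0 0 1 = 0"
proof -
  have "t \<noteq> 0"
    using notin_of_nat_atMost[OF t, of 0] by auto
  from defect2_100_plus_001_eq[OF assms(1) this]
  have "defect2 n t 1 0 0 + defect2 n t 0 0 1
      = ((t - 1) gchoose (n - 1)) * eulerpoly (n - 1) 0 * (1 + (-1) ^ (n - 1))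
        + 2 * bern n / of_nat n * (1 - (-1) ^ n)" .
  also have "\<dots> = 0"
  proof (cases "even n")
    case True
    then show ?thesis
      using assms(1) by (simp add: power_diff)
  next
    case False
    then consider "n = 1" | "even (n - 1)" "n \<noteq> 1"
      by (cases "n = 1") auto
    then show ?thesis
    proof cases
      case 2
      then show ?thesis
        using False assms(1) bern_odd_eq_0[of n] eulerpoly_even_at_0[of "n - 1"] by simp
    qed simp
  qed
  finally show ?thesis .
qed

lemma defect2_eq_0:
  assumes "n \<ge> 1" and "t \<notin> of_nat ` {..n}" and "x + y + z = 1"
  shows "defect2 n t x y z = 0"
  using assms
proof (induction n arbitrary: t x y z rule: nat_induct_at_least)
  case base
  then show ?case
    by (rule defect2_1)
next
  case (Suc n)
  have t: "t \<notin> of_nat ` {..n}" "t - 1 \<notin> of_nat ` {..n}"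
    using Suc.prems(1) notin_of_nat_atMost_Suc_shift by auto
  have invariant: "defect2 (Suc n) t a b c = defect2 (Suc n) t 0 0 1" if "a + b + c = 1" for a b c
    by (rule plane_invariant_if_has_field_derivative[OF
          defect2_has_field_derivative_xz[OF Suc.hyps Suc.prems(1)]
          defect2_has_field_derivative_yz[OF Suc.hyps Suc.prems(1)]])
      (use Suc.IH t that in auto)
  show ?case
    using invariant[OF Suc.prems(2)] invariant[of 1 0 0] defect2_100_plus_001[OF _ Suc.prems(1)] by simp
qed

lemma identity2:
  assumes "n > 0" and "x + y + z = 1" and "t \<notin> of_nat ` {..n}"
  shows "of_nat n / 2 * (t gchoose n)
       * (\<Sum>k<n. of_nat ((n - 1) choose k) * eulerpoly k x / (t - of_nat k) * eulerpoly (n - 1 - k) y)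
     - (-1) ^ n * eulerpoly n z * (t gchoose n) * (\<Sum>k<n. 1 / (t - of_nat k))
   = (-1) ^ n * (\<Sum>k=1..n. (t gchoose (n - k)) * bernpoly k y / of_nat k * eulerpoly (n - k) z)
     - (\<Sum>k=1..n. ((of_nat n - 1 - t) gchoose (n - k)) * bernpoly k x / of_nat k * eulerpoly (n - k) z)"
proof -
  have "{..<n} = {..n - 1}"
    using assms(1) by auto
  then have EE: "of_nat n / 2 * (t gchoose n)
       * (\<Sum>k<n. of_nat ((n - 1) choose k) * eulerpoly k x / (t - of_nat k) * eulerpoly (n - 1 - k) y)
      = wconv eulerpoly eulerpoly (coef2_EE n t) (n - 1) x y"
    by (simp add: wconv_def coef2_EE_def sum_distrib_left mult_ac)
  have E: "(-1) ^ n * eulerpoly n z * (t gchoose n) * (\<Sum>k<n. 1 / (t - of_nat k))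
      = coef2_E n t * eulerpoly n z"
    by (simp add: coef2_E_def mult_ac)
  have BE_y: "(-1) ^ n * (\<Sum>k=1..n. (t gchoose (n - k)) * bernpoly k y / of_nat k * eulerpoly (n - k) z)
      = wconv bernpoly eulerpoly (coef2_BE_y n t) n y z"
    by (subst sum_atLeast_1_atMost_eq) (simp_all add: wconv_def coef2_BE_y_def sum_distrib_left mult_ac)
  have BE_x: "(\<Sum>k=1..n. ((of_nat n - 1 - t) gchoose (n - k)) * bernpoly k x / of_nat k * eulerpoly (n - k) z)
      = wconv bernpoly eulerpoly (coef2_BE_x n t) n x z"
    by (subst sum_atLeast_1_atMost_eq) (simp_all add: wconv_def coef2_BE_x_def mult_ac)
  have "defect2 n t x y z = 0"
    using defect2_eq_0 assms by simp
  then show ?thesis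
    unfolding EE E BE_y BE_x defect2_def by (simp add: algebra_simps)
qed

section \<open>The third identity\<close>

definition coef3_BB :: "nat \<Rightarrow> complex \<Rightarrow> nat \<Rightarrow> complex" where
  "coef3_BB n t k = (-1) ^ (n - 1) / of_nat n * ((t - 1) gchoose (n - 1)) * of_nat (n choose k) / (t - of_nat k)"

definition coef3_B :: "nat \<Rightarrow> complex \<Rightarrow> complex" where
  "coef3_B n t = 1 / of_nat n * ((t - 1) gchoose (n - 1)) * (\<Sum>k=1..<n. 1 / (t - of_nat k))"

definition coef3_BB_y :: "nat \<Rightarrow> complex \<Rightarrow> nat \<Rightarrow> complex" where
  "coef3_BB_y n t k = 1 / t * (t gchoose (n - k)) / of_nat k"

definition coef3_BB_x :: "nat \<Rightarrow> complex \<Rightarrow> nat \<Rightarrow> complex" where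
  "coef3_BB_x n t k = (-1) ^ n / (of_nat n - t) * ((of_nat n - t) gchoose (n - k)) / of_nat k"

definition defect3 :: "nat \<Rightarrow> complex \<Rightarrow> complex \<Rightarrow> complex \<Rightarrow> complex \<Rightarrow> complex" where
  "defect3 n t x y z = wconv bernpoly bernpoly (coef3_BB n t) n x y - coef3_B n t * bernpoly n z
     - wconv bernpoly bernpoly (coef3_BB_y n t) n y z - wconv bernpoly bernpoly (coef3_BB_x n t) n x z"

lemma coef3_BB_Suc_xz:
  assumes "n \<ge> 1" and "t \<noteq> of_nat (Suc j)"
  shows "coef3_BB (Suc n) t (Suc j) * of_nat (Suc j) = - (t - 1) * coef3_BB n (t - 1) j"
proof -
  define p where "p = (-1::complex) ^ (n - 1)"
  define d where "d = t - 1 - of_nat j"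
  have C: "of_nat (Suc n choose Suc j) = (of_nat (Suc n) * of_nat (n choose j) / of_nat (Suc j) :: complex)"
    using of_nat_Suc_times_binomial[of j "Suc n"] by (simp add: field_simps del: of_nat_Suc)
  have b: "(t - 1) gchoose n = (t - 1) * ((t - 1 - 1) gchoose (n - 1)) / of_nat n"
    using gbinomial_absorption_pred[OF assms(1), of "t - 1"] assms(1) by (simp add: field_simps)
  have p: "(-1::complex) ^ n = - p"
    using assms(1) by (simp add: p_def minus_one_power_pred)
  have d: "t - of_nat (Suc j) = d" "t - 1 - of_nat j = d" "d \<noteq> 0"
    using assms(2) by (simp_all add: d_def algebra_simps)
  have "of_nat n \<noteq> (0::complex)"
    using assms(1) by simp
  then show ?thesis
    unfolding coef3_BB_def diff_Suc_1 C b p p_def[symmetric] d(1,2) using d(3)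
    by (simp add: field_simps del: of_nat_Suc)
qed

lemma coef3_BB_Suc_yz:
  assumes "n \<ge> 1" and "j \<le> n" and "t - of_nat j \<noteq> 0"
  shows "coef3_BB (Suc n) t j * of_nat (Suc n - j) = (of_nat n - t) * coef3_BB n t j"
proof -
  define p where "p = (-1::complex) ^ (n - 1)"
  have nz: "of_nat (Suc n - j) \<noteq> (0::complex)" "of_nat n \<noteq> (0::complex)"
    using of_nat_Suc_diff_neq_0[OF assms(2)] assms(1) by (simp_all del: of_nat_diff)
  have C: "of_nat (Suc n choose j) = (of_nat (Suc n) * of_nat (n choose j) / of_nat (Suc n - j) :: complex)"
    using of_nat_binomial_absorb_comp[of "Suc n" j, where 'a = complex] nz(1)
    by (simp add: divide_simps mult.commute del: of_nat_Suc of_nat_diff)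
  have b: "(t - 1) gchoose n = (t - of_nat n) * ((t - 1) gchoose (n - 1)) / of_nat n"
    using gbinomial_absorb_pred[OF assms(1), of "t - 1"] nz(2) by (simp add: divide_simps mult.commute)
  have p: "(-1::complex) ^ n = - p"
    using assms(1) by (simp add: p_def minus_one_power_pred)
  show ?thesis
    unfolding coef3_BB_def diff_Suc_1 C b p p_def[symmetric] using assms(3) nz
    by (simp add: divide_simps del: of_nat_Suc of_nat_diff; simp add: algebra_simps)
qed

lemma coef3_BB_y_Suc_xz:
  assumes "j \<le> n" and "t \<noteq> 0" and "t - 1 \<noteq> 0"
  shows "coef3_BB_y (Suc n) t j * of_nat (Suc n - j) = (t - 1) * coef3_BB_y n (t - 1) j"
proof -
  have nz: "of_nat (Suc n - j) \<noteq> (0::complex)"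
    using of_nat_Suc_diff_neq_0[OF assms(1)] .
  have "t gchoose (Suc n - j) = t * ((t - 1) gchoose (n - j)) / of_nat (Suc n - j)"
    using gbinomial_absorption[of "n - j" t] nz assms(1)
    by (simp add: Suc_diff_le divide_simps mult.commute del: of_nat_Suc of_nat_diff)
  then show ?thesis
    using assms(2,3) nz by (simp add: coef3_BB_y_def divide_simps del: of_nat_diff)
qed

lemma coef3_BB_y_Suc_yz:
  assumes "j \<le> n" and "t \<noteq> 0" and "t - of_nat n \<noteq> 0"
  shows "coef3_BB_y (Suc n) t (Suc j) * of_nat (Suc j) - coef3_BB_y (Suc n) t j * of_nat (Suc n - j)
       = (of_nat n - t) * coef3_BB_y n t j + (if j = 0 then ((t - 1) gchoose n) / (t - of_nat n) else 0)"
proof -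
  have A: "coef3_BB_y (Suc n) t (Suc j) * of_nat (Suc j) = (t gchoose (n - j)) / t"
    by (simp add: coef3_BB_y_def del: of_nat_Suc)
  show ?thesis
  proof (cases "j = 0")
    case True
    have "t gchoose n = t * ((t - 1) gchoose n) / (t - of_nat n)"
      using gbinomial_absorb_comp[of t n] assms(3) by (simp add: field_simps)
    with True show ?thesis
      unfolding A using assms(2) by (simp add: coef3_BB_y_def)
  next
    case False
    have nz: "of_nat (Suc n - j) \<noteq> (0::complex)"
      using of_nat_Suc_diff_neq_0[OF assms(1)] .
    have "t gchoose (Suc n - j) = (t - of_nat n + of_nat j) * (t gchoose (n - j)) / of_nat (Suc n - j)"
      using gbinomial_Suc_absorb[of "n - j" t] nz assms(1)
      by (simp add: Suc_diff_le divide_simps del: of_nat_Suc of_nat_diff) (simp add: algebra_simps)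
    then show ?thesis
      unfolding A using False assms(2) nz
      by (simp add: coef3_BB_y_def divide_simps del: of_nat_diff; simp add: algebra_simps)
  qed
qed

lemma coef3_BB_x_Suc_xz:
  assumes "j \<le> n" and "of_nat (Suc n) - t \<noteq> 0" and "t - 1 \<noteq> 0"
  shows "coef3_BB_x (Suc n) t (Suc j) * of_nat (Suc j) - coef3_BB_x (Suc n) t j * of_nat (Suc n - j)
       = - (t - 1) * coef3_BB_x n (t - 1) j + (if j = 0 then ((t - 1) gchoose n) / (t - 1) else 0)"
proof -
  define s where "s = of_nat (Suc n) - t"
  define p where "p = (-1::complex) ^ n"
  have s: "of_nat (Suc n) - t = s" "of_nat n - (t - 1) = s" "s \<noteq> 0"
    using assms(2) by (simp_all add: s_def)
  have A: "coef3_BB_x (Suc n) t (Suc j) * of_nat (Suc j) = - p / s * (s gchoose (n - j))"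
    unfolding coef3_BB_x_def s(1) by (simp add: p_def del: of_nat_Suc)
  have C: "coef3_BB_x n (t - 1) j = p / s * (s gchoose (n - j)) / of_nat j"
    unfolding coef3_BB_x_def s(2) p_def ..
  show ?thesis
  proof (cases "j = 0")
    case True
    have "s gchoose n = p * ((t - 2) gchoose n)"
      using gbinomial_negated_upper[of s n] by (simp add: s_def p_def algebra_simps)
    also have "(t - 2) gchoose n = - s * ((t - 1) gchoose n) / (t - 1)"
      using gbinomial_absorb_comp[of "t - 1" n] assms(3) by (simp add: s_def divide_simps algebra_simps)
    finally have "s gchoose n = - p * s * ((t - 1) gchoose n) / (t - 1)"
      by simp
    moreover have "p * p = 1"
      by (simp add: p_def flip: power_add)
    ultimately show ?thesis
      unfolding A using True s(3) by (simp add: coef3_BB_x_def)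
  next
    case False
    have nz: "of_nat (Suc n - j) \<noteq> (0::complex)"
      using of_nat_Suc_diff_neq_0[OF assms(1)] .
    have "s gchoose (Suc n - j) = (s - of_nat n + of_nat j) * (s gchoose (n - j)) / of_nat (Suc n - j)"
      using gbinomial_Suc_absorb[of "n - j" s] nz assms(1)
      by (simp add: Suc_diff_le divide_simps del: of_nat_Suc of_nat_diff) (simp add: algebra_simps)
    then have B: "coef3_BB_x (Suc n) t j * of_nat (Suc n - j)
        = - p / s * (s - of_nat n + of_nat j) * (s gchoose (n - j)) / of_nat j"
      unfolding coef3_BB_x_def s(1) using nz by (simp add: p_def divide_simps del: of_nat_diff)
    show ?thesis
      unfolding A B C using False s(3) by (simp add: divide_simps; simp add: s_def algebra_simps)
  qed
qed

lemma coef3_BB_x_Suc_yz: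
  assumes "j \<le> n" and "of_nat (Suc n) - t \<noteq> 0" and "of_nat n - t \<noteq> 0"
  shows "coef3_BB_x (Suc n) t j * of_nat (Suc n - j) = - (of_nat n - t) * coef3_BB_x n t j"
proof (cases "j = 0")
  case False
  define s where "s = of_nat (Suc n) - t"
  have s: "of_nat (Suc n) - t = s" "of_nat n - t = s - 1"
    by (simp_all add: s_def)
  have nz: "of_nat (Suc n - j) \<noteq> (0::complex)"
    using of_nat_Suc_diff_neq_0[OF assms(1)] .
  have G: "s gchoose (Suc n - j) = s * ((s - 1) gchoose (n - j)) / of_nat (Suc n - j)"
    using gbinomial_absorption[of "n - j" s] nz assms(1)
    by (simp add: Suc_diff_le divide_simps mult.commute del: of_nat_Suc of_nat_diff)
  have "s \<noteq> 0" "s - 1 \<noteq> 0"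
    using assms(2,3) by (simp_all add: s_def)
  then show ?thesis
    unfolding coef3_BB_x_def s G using False nz
    by (simp add: divide_simps del: of_nat_diff; simp add: algebra_simps)
qed (simp add: coef3_BB_x_def)

lemma coef3_B_Suc_xz:
  assumes "n \<ge> 1" and "t - 1 \<noteq> 0"
  shows "(t - 1) * coef3_B n (t - 1) + ((t - 1) gchoose n) / (t - 1) = of_nat (Suc n) * coef3_B (Suc n) t"
proof -
  have "(\<Sum>k=1..<Suc n. 1 / (t - of_nat k)) = 1 / (t - 1) + (\<Sum>k=Suc 1..<Suc n. 1 / (t - of_nat k))"
    using assms(1) by (subst sum.atLeast_Suc_lessThan) simp_all
  also have "(\<Sum>k=Suc 1..<Suc n. 1 / (t - of_nat k)) = (\<Sum>k=1..<n. 1 / (t - 1 - of_nat k))"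
    unfolding sum.shift_bounds_Suc_ivl by (simp add: diff_diff_eq)
  finally have S: "(\<Sum>k=1..<Suc n. 1 / (t - of_nat k)) = 1 / (t - 1) + (\<Sum>k=1..<n. 1 / (t - 1 - of_nat k))" .
  have b: "(t - 1) gchoose n = (t - 1) * ((t - 1 - 1) gchoose (n - 1)) / of_nat n"
    using gbinomial_absorption_pred[OF assms(1), of "t - 1"] assms(1) by (simp add: divide_simps mult.commute)
  show ?thesis
    unfolding coef3_B_def diff_Suc_1 S b using assms
    by (simp add: divide_simps del: of_nat_Suc; simp add: algebra_simps)
qed

lemma coef3_B_Suc_yz:
  assumes "n \<ge> 1" and "t - of_nat n \<noteq> 0"
  shows "((t - 1) gchoose n) / (t - of_nat n) - (of_nat n - t) * coef3_B n t = of_nat (Suc n) * coef3_B (Suc n) t"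
proof -
  have S: "(\<Sum>k=1..<Suc n. 1 / (t - of_nat k)) = (\<Sum>k=1..<n. 1 / (t - of_nat k)) + 1 / (t - of_nat n)"
    using assms(1) by simp
  have b: "(t - 1) gchoose n = (t - of_nat n) * ((t - 1) gchoose (n - 1)) / of_nat n"
    using gbinomial_absorb_pred[OF assms(1), of "t - 1"] assms(1) by (simp add: divide_simps mult.commute)
  show ?thesis
    unfolding coef3_B_def diff_Suc_1 S b using assms
    by (simp add: divide_simps del: of_nat_Suc; simp add: algebra_simps)
qed

lemma defect3_has_field_derivative_xz:
  assumes "n \<ge> 1" and t: "t \<notin> of_nat ` {..Suc n}"
  shows "((\<lambda>s. defect3 (Suc n) t (a + s) b (c - s)) has_field_derivative
           - (t - 1) * defect3 n (t - 1) (a + s) b (c - s)) (at s)"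
proof -
  have x: "((\<lambda>s. a + s) has_field_derivative 1) (at s)"
    and y: "((\<lambda>s. b) has_field_derivative 0) (at s)"
    and z: "((\<lambda>s. c - s) has_field_derivative -1) (at s)"
    by (auto intro!: derivative_eq_intros)
  have t0: "t \<noteq> 0" and t1: "t - 1 \<noteq> 0" and tn: "of_nat (Suc n) - t \<noteq> 0"
    using notin_of_nat_atMost[OF t, of 0] notin_of_nat_atMost[OF t, of 1] notin_of_nat_atMost[OF t, of "Suc n"]
      assms(1) by auto
  have BB: "((\<lambda>s. wconv bernpoly bernpoly (coef3_BB (Suc n) t) (Suc n) (a + s) b) has_field_derivative
      - (t - 1) * wconv bernpoly bernpoly (coef3_BB n (t - 1)) n (a + s) b + 0 * bernpoly 0 (a + s) * bernpoly n b)
      (at s)"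
    apply (rule wconv_has_field_derivative_rec[OF appell_seq_bernpoly appell_seq_bernpoly x y])
    subgoal for j
      using coef3_BB_Suc_xz[OF assms(1), of t j] notin_of_nat_atMost(1)[OF t, of "Suc j"] by simp
    done
  have B_val: "coef3_B (Suc n) t * (-1 * of_nat (Suc n) * bernpoly n (c - s))
      = - ((t - 1) * coef3_B n (t - 1) + ((t - 1) gchoose n) / (t - 1)) * bernpoly n (c - s)"
    unfolding coef3_B_Suc_xz[OF assms(1) t1] by (simp add: algebra_simps)
  have B: "((\<lambda>s. coef3_B (Suc n) t * bernpoly (Suc n) (c - s)) has_field_derivative
      - ((t - 1) * coef3_B n (t - 1) + ((t - 1) gchoose n) / (t - 1)) * bernpoly n (c - s)) (at s)"
    using DERIV_cmult[OF appell_seq_chain[OF appell_seq_bernpoly z, of "Suc n"], of "coef3_B (Suc n) t"]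
    unfolding diff_Suc_1 B_val .
  have BB_y: "((\<lambda>s. wconv bernpoly bernpoly (coef3_BB_y (Suc n) t) (Suc n) b (c - s)) has_field_derivative
      - (t - 1) * wconv bernpoly bernpoly (coef3_BB_y n (t - 1)) n b (c - s) + 0 * bernpoly 0 b * bernpoly n (c - s))
      (at s)"
    apply (rule wconv_has_field_derivative_rec[OF appell_seq_bernpoly appell_seq_bernpoly y z])
    subgoal for j
      using coef3_BB_y_Suc_xz[of j n t] t0 t1 by (simp; simp add: algebra_simps)
    done
  have BB_x: "((\<lambda>s. wconv bernpoly bernpoly (coef3_BB_x (Suc n) t) (Suc n) (a + s) (c - s))
      has_field_derivative - (t - 1) * wconv bernpoly bernpoly (coef3_BB_x n (t - 1)) n (a + s) (c - s)
        + ((t - 1) gchoose n) / (t - 1) * bernpoly 0 (a + s) * bernpoly n (c - s)) (at s)"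
    apply (rule wconv_has_field_derivative_rec[OF appell_seq_bernpoly appell_seq_bernpoly x z])
    subgoal for j
      using coef3_BB_x_Suc_xz[of j n t] tn t1 by simp
    done
  from DERIV_diff[OF DERIV_diff[OF DERIV_diff[OF BB B] BB_y] BB_x] show ?thesis
    unfolding defect3_def by (simp add: algebra_simps)
qed

lemma defect3_has_field_derivative_yz:
  assumes "n \<ge> 1" and t: "t \<notin> of_nat ` {..Suc n}"
  shows "((\<lambda>s. defect3 (Suc n) t a (b + s) (c - s)) has_field_derivative
           (of_nat n - t) * defect3 n t a (b + s) (c - s)) (at s)"
proof -
  have x: "((\<lambda>s. a) has_field_derivative 0) (at s)"
    and y: "((\<lambda>s. b + s) has_field_derivative 1) (at s)"
    and z: "((\<lambda>s. c - s) has_field_derivative -1) (at s)"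
    by (auto intro!: derivative_eq_intros)
  have t0: "t \<noteq> 0" and tn: "t - of_nat n \<noteq> 0" "of_nat n - t \<noteq> 0" "of_nat (Suc n) - t \<noteq> 0"
    using notin_of_nat_atMost[OF t, of 0] notin_of_nat_atMost[OF t, of n] notin_of_nat_atMost[OF t, of "Suc n"]
    by auto
  have BB: "((\<lambda>s. wconv bernpoly bernpoly (coef3_BB (Suc n) t) (Suc n) a (b + s)) has_field_derivative
      (of_nat n - t) * wconv bernpoly bernpoly (coef3_BB n t) n a (b + s) + 0 * bernpoly 0 a * bernpoly n (b + s))
      (at s)"
    apply (rule wconv_has_field_derivative_rec[OF appell_seq_bernpoly appell_seq_bernpoly x y])
    subgoal for j
      using coef3_BB_Suc_yz[OF assms(1), of j t] notin_of_nat_atMost(2)[OF t, of j] by simp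
    done
  have B_val: "coef3_B (Suc n) t * (-1 * of_nat (Suc n) * bernpoly n (c - s))
      = - (((t - 1) gchoose n) / (t - of_nat n) - (of_nat n - t) * coef3_B n t) * bernpoly n (c - s)"
    unfolding coef3_B_Suc_yz[OF assms(1) tn(1)] by (simp add: algebra_simps)
  have B: "((\<lambda>s. coef3_B (Suc n) t * bernpoly (Suc n) (c - s)) has_field_derivative
      - (((t - 1) gchoose n) / (t - of_nat n) - (of_nat n - t) * coef3_B n t) * bernpoly n (c - s)) (at s)"
    using DERIV_cmult[OF appell_seq_chain[OF appell_seq_bernpoly z, of "Suc n"], of "coef3_B (Suc n) t"]
    unfolding diff_Suc_1 B_val .
  have BB_y: "((\<lambda>s. wconv bernpoly bernpoly (coef3_BB_y (Suc n) t) (Suc n) (b + s) (c - s))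
      has_field_derivative (of_nat n - t) * wconv bernpoly bernpoly (coef3_BB_y n t) n (b + s) (c - s)
        + ((t - 1) gchoose n) / (t - of_nat n) * bernpoly 0 (b + s) * bernpoly n (c - s)) (at s)"
    apply (rule wconv_has_field_derivative_rec[OF appell_seq_bernpoly appell_seq_bernpoly y z])
    subgoal for j
      using coef3_BB_y_Suc_yz[of j n t] t0 tn(1) by simp
    done
  have BB_x: "((\<lambda>s. wconv bernpoly bernpoly (coef3_BB_x (Suc n) t) (Suc n) a (c - s)) has_field_derivative
      (of_nat n - t) * wconv bernpoly bernpoly (coef3_BB_x n t) n a (c - s) + 0 * bernpoly 0 a * bernpoly n (c - s))
      (at s)"
    apply (rule wconv_has_field_derivative_rec[OF appell_seq_bernpoly appell_seq_bernpoly x z])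
    subgoal for j
      using coef3_BB_x_Suc_yz[of j n t] tn(2,3) by (simp; simp add: algebra_simps)
    done
  from DERIV_diff[OF DERIV_diff[OF DERIV_diff[OF BB B] BB_y] BB_x] show ?thesis
    unfolding defect3_def by (simp add: algebra_simps)
qed

lemma defect3_1:
  assumes "t \<notin> of_nat ` {..1}"
  shows "defect3 1 t x y z = 0"
proof -
  have "t \<noteq> 0" "t - 1 \<noteq> 0" "1 - t \<noteq> 0"
    using notin_of_nat_atMost[OF assms, of 0] notin_of_nat_atMost[OF assms, of 1] by auto
  then show ?thesis
    by (simp add: defect3_def coef3_BB_def coef3_B_def coef3_BB_y_def coef3_BB_x_def divide_simps;
        simp add: algebra_simps)
qed

lemma defect3_100_minus_001_eq:
  assumes "n \<ge> 2"
  shows "defect3 n t 1 0 0 - defect3 n t 0 0 1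
       = bern (n - 1) * (coef3_BB n t 1 + coef3_BB_y n t (n - 1) - coef3_BB_x n t 1 + coef3_BB_x n t (n - 1))"
proof -
  have n1: "n \<ge> 1"
    using assms by simp
  have "defect3 n t 1 0 0 - defect3 n t 0 0 1 =
      (wconv bernpoly bernpoly (coef3_BB n t) n 1 0 - wconv bernpoly bernpoly (coef3_BB n t) n 0 0)
    - coef3_B n t * (bernpoly n 0 - bernpoly n 1)
    + (wconv bernpoly bernpoly (coef3_BB_y n t) n 0 1 - wconv bernpoly bernpoly (coef3_BB_y n t) n 0 0)
    - ((wconv bernpoly bernpoly (coef3_BB_x n t) n 1 0 - wconv bernpoly bernpoly (coef3_BB_x n t) n 0 0)
       - (wconv bernpoly bernpoly (coef3_BB_x n t) n 0 1 - wconv bernpoly bernpoly (coef3_BB_x n t) n 0 0))"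
    unfolding defect3_def by (simp add: algebra_simps)
  also have "\<dots> = bern (n - 1) * (coef3_BB n t 1 + coef3_BB_y n t (n - 1) - coef3_BB_x n t 1 + coef3_BB_x n t (n - 1))"
    unfolding wconv_bernpoly_left_1_minus_0[OF n1] wconv_bernpoly_right_1_minus_0[OF n1]
    using bernpoly_1_minus_0[of n] assms(1) by (simp add: algebra_simps)
  finally show ?thesis .
qed

lemma defect3_100_minus_001:
  assumes "n \<ge> 2" and t: "t \<notin> of_nat ` {..n}"
  shows "defect3 n t 1 0 0 - defect3 n t 0 0 1 = 0"
proof -
  have t0: "t \<noteq> 0" and t1: "t - 1 \<noteq> 0" and tn: "of_nat n - t \<noteq> 0"
    using notin_of_nat_atMost[OF t, of 0] notin_of_nat_atMost[OF t, of 1] notin_of_nat_atMost[OF t, of n]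
      assms(1) by auto
  have "defect3 n t 1 0 0 - defect3 n t 0 0 1
      = bern (n - 1) * (coef3_BB n t 1 + coef3_BB_y n t (n - 1) - coef3_BB_x n t 1 + coef3_BB_x n t (n - 1))"
    by (rule defect3_100_minus_001_eq[OF assms(1)])
  also have "\<dots> = 0"
  proof (cases "even n")
    case True
    show ?thesis
    proof (cases "n = 2")
      case True
      then show ?thesis
        using t0 t1 tn by (simp add: coef3_BB_def coef3_BB_y_def coef3_BB_x_def numeral_2_eq_2 field_simps)
    next
      case False
      with \<open>even n\<close> assms(1) have "bern (n - 1) = 0"
        by (intro bern_odd_eq_0) auto
      then show ?thesis
        by simp
    qed
  next
    case False
    then have p: "(-1::complex) ^ n = -1" "(-1::complex) ^ (n - 1) = 1"
      using assms(1) by (simp_all add: minus_one_power_pred)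
    have e: "of_nat (n - 1) - (t - 1) = of_nat n - t"
      using assms(1) by (simp add: of_nat_diff)
    have "((of_nat n - t) gchoose (n - 1)) / (of_nat n - t) = - ((t - 1) gchoose (n - 1)) / (t - 1)"
      using gbinomial_reflect_div[of "t - 1" "n - 1"] t1 tn p(2) unfolding e by simp
    moreover have "coef3_BB n t 1 = ((t - 1) gchoose (n - 1)) / (t - 1)"
      using assms(1) p(2) by (simp add: coef3_BB_def field_simps)
    moreover have "coef3_BB_y n t (n - 1) = 1 / of_nat (n - 1)"
      using assms(1) t0 by (simp add: coef3_BB_y_def)
    moreover have "coef3_BB_x n t 1 = - (((of_nat n - t) gchoose (n - 1)) / (of_nat n - t))"
      by (simp add: coef3_BB_x_def p(1))
    moreover have "coef3_BB_x n t (n - 1) = - 1 / of_nat (n - 1)"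
      using assms(1) tn by (simp add: coef3_BB_x_def p(1))
    ultimately show ?thesis
      by simp
  qed
  finally show ?thesis .
qed

lemma defect3_010_minus_001_eq:
  assumes "n \<ge> 2"
  shows "defect3 n t 0 1 0 - defect3 n t 0 0 1
       = bern (n - 1) * (coef3_BB n t (n - 1) - coef3_BB_y n t 1 + coef3_BB_y n t (n - 1)
      + coef3_BB_x n t (n - 1))"
proof -
  have n1: "n \<ge> 1"
    using assms by simp
  have "defect3 n t 0 1 0 - defect3 n t 0 0 1 =
      (wconv bernpoly bernpoly (coef3_BB n t) n 0 1 - wconv bernpoly bernpoly (coef3_BB n t) n 0 0)
    - coef3_B n t * (bernpoly n 0 - bernpoly n 1)
    - ((wconv bernpoly bernpoly (coef3_BB_y n t) n 1 0 - wconv bernpoly bernpoly (coef3_BB_y n t) n 0 0)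
       - (wconv bernpoly bernpoly (coef3_BB_y n t) n 0 1 - wconv bernpoly bernpoly (coef3_BB_y n t) n 0 0))
    + (wconv bernpoly bernpoly (coef3_BB_x n t) n 0 1 - wconv bernpoly bernpoly (coef3_BB_x n t) n 0 0)"
    unfolding defect3_def by (simp add: algebra_simps)
  also have "\<dots> = bern (n - 1) * (coef3_BB n t (n - 1) - coef3_BB_y n t 1 + coef3_BB_y n t (n - 1)
      + coef3_BB_x n t (n - 1))"
    unfolding wconv_bernpoly_left_1_minus_0[OF n1] wconv_bernpoly_right_1_minus_0[OF n1]
    using bernpoly_1_minus_0[of n] assms(1) by (simp add: algebra_simps)
  finally show ?thesis .
qed

lemma defect3_010_minus_001:
  assumes "n \<ge> 2" and t: "t \<notin> of_nat ` {..n}"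
  shows "defect3 n t 0 1 0 - defect3 n t 0 0 1 = 0"
proof -
  have t0: "t \<noteq> 0" and t1: "t - 1 \<noteq> 0" and tn: "of_nat n - t \<noteq> 0" and tn1: "t - of_nat (n - 1) \<noteq> 0"
    using notin_of_nat_atMost[OF t, of 0] notin_of_nat_atMost[OF t, of 1] notin_of_nat_atMost[OF t, of n]
      notin_of_nat_atMost[OF t, of "n - 1"] assms(1) by auto
  have "defect3 n t 0 1 0 - defect3 n t 0 0 1
      = bern (n - 1) * (coef3_BB n t (n - 1) - coef3_BB_y n t 1 + coef3_BB_y n t (n - 1)
      + coef3_BB_x n t (n - 1))"
    by (rule defect3_010_minus_001_eq[OF assms(1)])
  also have "\<dots> = 0"
  proof (cases "even n")
    case True
    show ?thesis
    proof (cases "n = 2")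
      case True
      then show ?thesis
        using t0 t1 tn by (simp add: coef3_BB_def coef3_BB_y_def coef3_BB_x_def numeral_2_eq_2 field_simps)
    next
      case False
      with \<open>even n\<close> assms(1) have "bern (n - 1) = 0"
        by (intro bern_odd_eq_0) auto
      then show ?thesis
        by simp
    qed
  next
    case False
    then have p: "(-1::complex) ^ n = -1" "(-1::complex) ^ (n - 1) = 1"
      using assms(1) by (simp_all add: minus_one_power_pred)
    have "n choose (n - 1) = n"
      using assms(1) binomial_symmetric[of "n - 1" n] by simp
    then have "coef3_BB n t (n - 1) = ((t - 1) gchoose (n - 1)) / (t - of_nat (n - 1))"
      using assms(1) p(2) by (simp add: coef3_BB_def)
    moreover have "coef3_BB_y n t 1 = ((t - 1) gchoose (n - 1)) / (t - of_nat (n - 1))"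
      using gbinomial_absorb_comp[of t "n - 1"] t0 tn1 by (simp add: coef3_BB_y_def field_simps)
    moreover have "coef3_BB_y n t (n - 1) = 1 / of_nat (n - 1)"
      using assms(1) t0 by (simp add: coef3_BB_y_def)
    moreover have "coef3_BB_x n t (n - 1) = - 1 / of_nat (n - 1)"
      using assms(1) tn by (simp add: coef3_BB_x_def p(1))
    ultimately show ?thesis
      by simp
  qed
  finally show ?thesis .
qed

text \<open>Unlike the other two identities, the evaluation of the third at the corners of the triangle
  only gives differences; the constant value of \<open>defect3 (Suc n) t\<close> on the plane is therefore
  read off from the derivative of \<open>defect3 (Suc (Suc n))\<close> along an edge.\<close>

lemma defect3_Suc_const_eq_0:
  assumes t: "t \<notin> of_nat ` {..Suc n}"
    and const: "\<And>a b c. a + b + c = 1 \<Longrightarrow> defect3 (Suc n) t a b c = d"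
  shows "d = 0"
proof (cases "t = -1")
  case False
  have t': "t + 1 \<notin> of_nat ` {..Suc (Suc n)}"
    using notin_of_nat_atMost_plus_1[OF t False] .
  have "((\<lambda>s. defect3 (Suc (Suc n)) (t + 1) s 0 (1 - s)) has_field_derivative - t * d) (at s)" for s
    using defect3_has_field_derivative_xz[of "Suc n" "t + 1", where a = 0 and b = 0 and c = 1 and s = s]
      t' const[of s 0 "1 - s"]
    by simp
  from has_field_derivative_const_imp_diff[OF this, of 0 1]
  have "t * d = 0"
    using defect3_100_minus_001[of "Suc (Suc n)" "t + 1"] t' by simp
  then show ?thesis
    using notin_of_nat_atMost(1)[OF t, of 0] by simp
next
  case True
  have t': "t \<notin> of_nat ` {..Suc (Suc n)}"
    using minus_1_notin_of_nat True by simp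
  have "((\<lambda>s. defect3 (Suc (Suc n)) t 0 s (1 - s)) has_field_derivative (of_nat (Suc n) - t) * d) (at s)" for s
    using defect3_has_field_derivative_yz[of "Suc n" t, where a = 0 and b = 0 and c = 1 and s = s]
      t' const[of 0 s "1 - s"]
    by simp
  from has_field_derivative_const_imp_diff[OF this, of 0 1]
  have "(of_nat (Suc n) - t) * d = 0"
    using defect3_010_minus_001[of "Suc (Suc n)" t] t' by simp
  moreover have "of_nat (Suc n) - t = of_nat (Suc (Suc n))"
    using True by simp
  ultimately show ?thesis
    by (simp del: of_nat_Suc)
qed

lemma defect3_eq_0:
  assumes "n \<ge> 1" and "t \<notin> of_nat ` {..n}" and "x + y + z = 1"
  shows "defect3 n t x y z = 0"
  using assms
proof (induction n arbitrary: t x y z rule: nat_induct_at_least)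
  case base
  then show ?case
    by (blast intro: defect3_1)
next
  case (Suc n)
  have t: "t \<notin> of_nat ` {..n}" "t - 1 \<notin> of_nat ` {..n}"
    using Suc.prems(1) notin_of_nat_atMost_Suc_shift by auto
  have invariant: "defect3 (Suc n) t a b c = defect3 (Suc n) t 0 0 1" if "a + b + c = 1" for a b c
    by (rule plane_invariant_if_has_field_derivative[OF
          defect3_has_field_derivative_xz[OF Suc.hyps Suc.prems(1)]
          defect3_has_field_derivative_yz[OF Suc.hyps Suc.prems(1)]])
      (use Suc.IH t that in auto)
  then show ?case
    using defect3_Suc_const_eq_0[OF Suc.prems(1) invariant] invariant[OF Suc.prems(2)] by simp
qed

lemma identity3:
  assumes "n > 0" and "x + y + z = 1" and "t \<notin> of_nat ` {..n}"
  shows "(-1) ^ (n - 1) / of_nat n * ((t - 1) gchoose (n - 1))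
       * (\<Sum>k\<le>n. of_nat (n choose k) * bernpoly k x / (t - of_nat k) * bernpoly (n - k) y)
     - bernpoly n z / of_nat n * ((t - 1) gchoose (n - 1)) * (\<Sum>k=1..<n. 1 / (t - of_nat k))
   = 1 / t * (\<Sum>k=1..n. (t gchoose (n - k)) * bernpoly k y / of_nat k * bernpoly (n - k) z)
     + (-1) ^ n / (of_nat n - t)
       * (\<Sum>k=1..n. ((of_nat n - t) gchoose (n - k)) * bernpoly k x / of_nat k * bernpoly (n - k) z)"
proof -
  have BB: "(-1) ^ (n - 1) / of_nat n * ((t - 1) gchoose (n - 1))
       * (\<Sum>k\<le>n. of_nat (n choose k) * bernpoly k x / (t - of_nat k) * bernpoly (n - k) y)
      = wconv bernpoly bernpoly (coef3_BB n t) n x y"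
    by (simp add: wconv_def coef3_BB_def sum_distrib_left mult_ac)
  have B: "bernpoly n z / of_nat n * ((t - 1) gchoose (n - 1)) * (\<Sum>k=1..<n. 1 / (t - of_nat k))
      = coef3_B n t * bernpoly n z"
    by (simp add: coef3_B_def mult_ac)
  have BB_y: "1 / t * (\<Sum>k=1..n. (t gchoose (n - k)) * bernpoly k y / of_nat k * bernpoly (n - k) z)
      = wconv bernpoly bernpoly (coef3_BB_y n t) n y z"
    by (subst sum_atLeast_1_atMost_eq) (simp_all add: wconv_def coef3_BB_y_def sum_distrib_left mult_ac)
  have BB_x: "(-1) ^ n / (of_nat n - t)
       * (\<Sum>k=1..n. ((of_nat n - t) gchoose (n - k)) * bernpoly k x / of_nat k * bernpoly (n - k) z)
      = wconv bernpoly bernpoly (coef3_BB_x n t) n x z"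
    by (subst sum_atLeast_1_atMost_eq) (simp_all add: wconv_def coef3_BB_x_def sum_distrib_left mult_ac)
  have "defect3 n t x y z = 0"
    using defect3_eq_0 assms by simp
  then show ?thesis
    unfolding BB B BB_y BB_x defect3_def by (simp add: algebra_simps)
qed

theorem theorem1p3:
  fixes n :: nat and x y z t :: complex
  assumes "n > 0" and "x + y + z = 1" and "\<forall>j::nat. j \<le> n \<longrightarrow> t \<noteq> of_nat j"
  shows
  "((-1) ^ n / 2 * (\<Sum>k<n. (t gchoose k) * eulerpoly k x * eulerpoly (n - 1 - k) y)
     = 1 / (of_nat n - t) * (\<Sum>k\<le>n. ((of_nat n - t) gchoose k) * bernpoly k x * eulerpoly (n - k) z)
       + (t gchoose n) * (\<Sum>k\<le>n. of_nat (n choose k) * eulerpoly k z / (t - of_nat k) * bernpoly (n - k) y))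
   \<and>
   (of_nat n / 2 * (t gchoose n) * (\<Sum>k<n. of_nat ((n - 1) choose k) * eulerpoly k x / (t - of_nat k) * eulerpoly (n - 1 - k) y)
     - (-1) ^ n * eulerpoly n z * (t gchoose n) * (\<Sum>k<n. 1 / (t - of_nat k))
   = (-1) ^ n * (\<Sum>k=1..n. (t gchoose (n - k)) * bernpoly k y / of_nat k * eulerpoly (n - k) z)
     - (\<Sum>k=1..n. ((of_nat n - 1 - t) gchoose (n - k)) * bernpoly k x / of_nat k * eulerpoly (n - k) z))
   \<and>
   ((-1) ^ (n - 1) / of_nat n * ((t - 1) gchoose (n - 1)) * (\<Sum>k\<le>n. of_nat (n choose k) * bernpoly k x / (t - of_nat k) * bernpoly (n - k) y)
     - bernpoly n z / of_nat n * ((t - 1) gchoose (n - 1)) * (\<Sum>k=1..<n. 1 / (t - of_nat k))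
   = 1 / t * (\<Sum>k=1..n. (t gchoose (n - k)) * bernpoly k y / of_nat k * bernpoly (n - k) z)
     + (-1) ^ n / (of_nat n - t) * (\<Sum>k=1..n. ((of_nat n - t) gchoose (n - k)) * bernpoly k x / of_nat k * bernpoly (n - k) z))"
proof -
  have t: "t \<notin> of_nat ` {..n}"
    using assms(3) by auto
  from identity1[OF assms(1,2) t] identity2[OF assms(1,2) t] identity3[OF assms(1,2) t] show ?thesis
    by (rule conjI[OF _ conjI])
qed

end
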